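(* Let $p$ be a prime, $q=p^r$, and let $\mathscr{C}\subseteq\mathbb{F}_q^n$ be a linear code over $\mathbb{F}_q$ of dimension $k$ with $1\le k<n$, and $\mathscr{D}\subseteq\mathbb{F}_{q^k}^m$ a linear code over $\mathbb{F}_{q^k}$ of dimension $s$ with $1\le s<m$, such that for every $1\le i\le m$ some codeword of $\mathscr{D}$ has $i$-th coordinate equal to $1$. Let $\kappa:\mathbb{F}_{q^k}\to\mathcal{L}(\mathscr{C},\mathbb{F}_p)$ be an $\mathbb{F}_p$-linear isomorphism, put $f_\lambda=\kappa(\lambda)$, and let $Q=\operatorname{span}\{\Phi_\Lambda:\Lambda\in\mathscr{D}\}\subseteq(\mathbb{C}^q)^{\otimes nm}$ with $\Phi_\Lambda$, $F_\Lambda$, $\mathscr{D}^\Theta$ and $\ell$ as defined in the context. Then $Q$ is a quantum stabilizer code of length $nm$ and dimension $q^{ks}$ (an $\llbracket nm,ks,\delta\rrbracket_q$ code) whose minimum distance is $$\delta=\min\{d(\mathscr{C}),\ell\},$$ where $d(\mathscr{C})$ is the minimum Hamming distance of $\mathscr{C}$. Moreover, the stabilizer group $\mathcal{S}$ of $Q$ is $$\mathcal{S}=\Big\{X(\mathbf{c}_1,\ldots,\mathbf{c}_m)Z(\mathbf{d}_1,\ldots,\mathbf{d}_m): (\mathbf{c}_1,\ldots,\mathbf{c}_m)\in\textstyle\bigcap_{\Lambda\in\mathscr{D}}\ker(F_\Lambda),\ \mathbf{d}_1,\ldots,\mathbf{d}_m\in\mathscr{C}^\perp\Big\},$$ and its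 centralizer in $\mathcal{P}_{nm}$ is $$C_{\mathcal{P}_{nm}}(\mathcal{S})=\{\omega^cX(\mathbf{u}_1,\ldots,\mathbf{u}_m)Z(\mathbf{v}_1,\ldots,\mathbf{v}_m): \omega^c \text{ an admissible phase},\ \mathbf{u}_1,\ldots,\mathbf{u}_m\in\mathscr{C},\ (\mathbf{v}_1,\ldots,\mathbf{v}_m)\in\mathscr{D}^\Theta\}.$$
   Context: Notation: $\operatorname{tr}:\mathbb{F}_q\to\mathbb{F}_p$ is the trace; for vectors $\mathbf{u},\mathbf{v}$ over $\mathbb{F}_q$ of equal length, $\mathbf{u}.\mathbf{v}=\sum_i u_iv_i$; $\mathscr{C}^\perp$ is the Euclidean dual of $\mathscr{C}$ in $\mathbb{F}_q^n$; $\zeta=e^{2\pi i/p}$. Qudits: $\mathbb{C}^q$ has orthonormal basis $\{|x\rangle:x\in\mathbb{F}_q\}$ and $(\mathbb{C}^q)^{\otimes N}$ has basis $|\mathbf{x}\rangle$, $\mathbf{x}\in\mathbb{F}_q^N$. Operators: $X(a)|x\rangle=|x+a\rangle$, $Z(b)|x\rangle=\zeta^{\operatorname{tr}(bx)}|x\rangle$, and for $\mathbf{a},\mathbf{b}\in\mathbb{F}_q^N$, $X(\mathbf{a})=X(a_1)\otimes\cdots\otimes X(a_N)$, $Z(\mathbf{b})=Z(b_1)\otimes\cdots\otimes Z(b_N)$. The error group $\mathcal{P}_N$ consists of $\omega^cX(\mathbf{a})Z(\mathbf{b})$ with $\mathbf{a},\mathbf{b}\in\mathbb{F}_q^N$,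 where the admissible phases are $\omega^c$ with $\omega=\zeta$, $c\in\mathbb{F}_p$ if $p$ is odd, and $\omega=i$, $c\in\{0,1,2,3\}$ if $p=2$. Its center $\mathcal{Z}(\mathcal{P}_N)$ is the set of scalar elements. The weight of $\omega^cX(\mathbf{a})Z(\mathbf{b})$ is the number of $j$ with $(a_j,b_j)\ne(0,0)$. For a subspace $Q$, its stabilizer group is $\operatorname{Stab}(Q)=\{E\in\mathcal{P}_N: Ev=v\ \forall v\in Q\}$; $Q$ is a stabilizer code if $Q=\{v:Ev=v\ \forall E\in\operatorname{Stab}(Q)\}$. For a stabilizer code with stabilizer $\mathcal{S}$, its minimum distance is $\min\{\operatorname{wt}(E):E\in C_{\mathcal{P}_N}(\mathcal{S})\setminus\mathcal{S}\mathcal{Z}(\mathcal{P}_N)\}$ (and $\min\{\operatorname{wt}(E):E\in\mathcal{S}\setminus\{I\}\}$ if $\mathcal{S}\mathcal{Z}(\mathcal{P}_N)= C_{\mathcal{P}_N}(\mathcal{S})$). An $\llbracket N,K,\delta\rrbracket_q$ code has length $N$, dimension $q^K$ and minimum distance $\delta$. Construction: $\mathcal{L}(\mathscr{C},\mathbb{F}_p)$ is the $\mathbb{F}_p$-space of $\mathbb{F}_p$-linear maps $\mathscr{C}\to\mathbb{F}_p$ (of size $q^k$), and $\mathbb{F}_{q^k}$ is viewed as an $\mathbb{F}_p$-space. For $\lambda\in\mathbb{F}_{q^k}$, $\phi_\lambda=q^{-k/2}\sum_{\mathbf{c}\in\mathscr{C}}\zeta^{f_\lambda(\mathbf{c})}|\mathbf{c}\rangle\in(\mathbb{C}^q)^{\otimes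 n}$, and for $\Lambda=(\lambda_1,\ldots,\lambda_m)\in\mathscr{D}$, $\Phi_\Lambda=\phi_{\lambda_1}\otimes\cdots\otimes\phi_{\lambda_m}$ and $F_\Lambda:\mathscr{C}^m\to\mathbb{F}_p$, $F_\Lambda(\mathbf{c}_1,\ldots,\mathbf{c}_m)=\sum_i f_{\lambda_i}(\mathbf{c}_i)$. For $\lambda\in\mathbb{F}_{q^k}$ let $\Theta(\lambda)=\{\mathbf{x}\in\mathbb{F}_q^n: f_\lambda(\mathbf{c})=\operatorname{tr}(\mathbf{c}.\mathbf{x})\ \forall\mathbf{c}\in\mathscr{C}\}$ (a coset of $\mathscr{C}^\perp$), and $\mathscr{D}^\Theta=\bigcup_{(\lambda_1,\ldots,\lambda_m)\in\mathscr{D}}\Theta(\lambda_1)\times\cdots\times\Theta(\lambda_m)\subseteq\mathbb{F}_q^{nm}$. Finally $\ell=\min\{\operatorname{wt}(\mathbf{X}):\mathbf{X}\in\mathscr{D}^\Theta\setminus(\mathscr{C}^\perp)^m\}$, where $\operatorname{wt}$ is the Hamming weight in $\mathbb{F}_q^{nm}$. *)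

theory Defs
  imports "HOL-Analysis.Analysis" "HOL-Library.Function_Algebras"
begin

text \<open>Vectors of length N over a field are functions nat => field vanishing from N on.\<close>
definition vecs :: "nat \<Rightarrow> (nat \<Rightarrow> 'a::zero) set" where
  "vecs N = {x. \<forall>i. N \<le> i \<longrightarrow> x i = 0}"

definition vscale :: "'a::times \<Rightarrow> (nat \<Rightarrow> 'a) \<Rightarrow> (nat \<Rightarrow> 'a)" where
  "vscale c x = (\<lambda>i. c * x i)"

definition dotp :: "nat \<Rightarrow> (nat \<Rightarrow> 'a::comm_ring_1) \<Rightarrow> (nat \<Rightarrow> 'a) \<Rightarrow> 'a" where
  "dotp N u v = (\<Sum>i<N. u i * v i)"

definition hw :: "nat \<Rightarrow> (nat \<Rightarrow> 'a::zero) \<Rightarrow> nat" where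
  "hw N x = card {i. i < N \<and> x i \<noteq> 0}"

definition lin_code :: "nat \<Rightarrow> (nat \<Rightarrow> 'a::field) set \<Rightarrow> bool" where
  "lin_code n C \<longleftrightarrow> C \<subseteq> vecs n \<and> module.subspace vscale C"

definition code_dim :: "(nat \<Rightarrow> 'a::field) set \<Rightarrow> nat" where
  "code_dim C = vector_space.dim vscale C"

definition min_dist :: "nat \<Rightarrow> (nat \<Rightarrow> 'a::ab_group_add) set \<Rightarrow> nat" where
  "min_dist n C = Min {hw n (x - y) | x y. x \<in> C \<and> y \<in> C \<and> x \<noteq> y}"

definition dual :: "nat \<Rightarrow> (nat \<Rightarrow> 'a::comm_ring_1) set \<Rightarrow> (nat \<Rightarrow> 'a) set" where
  "dual n C = {x \<in> vecs n. \<forall>c\<in>C. dotp n c x = 0}"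

text \<open>i-th block of length n of a vector of length n*m, and A^m inside F^(nm).\<close>
definition block :: "nat \<Rightarrow> nat \<Rightarrow> (nat \<Rightarrow> 'a::zero) \<Rightarrow> (nat \<Rightarrow> 'a)" where
  "block n i X = (\<lambda>t. if t < n then X (i * n + t) else 0)"

definition blocks_in :: "nat \<Rightarrow> nat \<Rightarrow> (nat \<Rightarrow> 'a::zero) set \<Rightarrow> (nat \<Rightarrow> 'a) set" where
  "blocks_in n m A = {X \<in> vecs (n * m). \<forall>i<m. block n i X \<in> A}"

definition Fp :: "nat \<Rightarrow> 'a::field set" where
  "Fp p = {of_nat j | j. j < p}"

definition tr :: "nat \<Rightarrow> nat \<Rightarrow> 'a::field \<Rightarrow> 'a" where
  "tr p r x = (\<Sum>i<r. x ^ (p ^ i))"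

definition zeta :: "nat \<Rightarrow> complex" where
  "zeta p = cis (2 * pi / real p)"

text \<open>zeta^t for t in F_p (t = of_nat j with 0 <= j < p).\<close>
definition zpow :: "nat \<Rightarrow> 'a::field \<Rightarrow> complex" where
  "zpow p t = zeta p ^ (THE j. j < p \<and> of_nat j = t)"

text \<open>F_p-linear maps C -> F_p, represented as functions vanishing outside C.\<close>
definition lin_maps :: "nat \<Rightarrow> (nat \<Rightarrow> 'a::field) set \<Rightarrow> ((nat \<Rightarrow> 'a) \<Rightarrow> 'a) set" where
  "lin_maps p C = {g. (\<forall>x\<in>C. \<forall>y\<in>C. g (x + y) = g x + g y)
                    \<and> (\<forall>a\<in>Fp p. \<forall>x\<in>C. g (vscale a x) = a * g x)
                    \<and> (\<forall>x\<in>C. g x \<in> Fp p)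
                    \<and> (\<forall>x. x \<notin> C \<longrightarrow> g x = 0)}"

definition Theta :: "nat \<Rightarrow> nat \<Rightarrow> nat \<Rightarrow> (nat \<Rightarrow> 'a::field) set \<Rightarrow> ((nat \<Rightarrow> 'a) \<Rightarrow> 'a) \<Rightarrow> (nat \<Rightarrow> 'a) set" where
  "Theta p r n C f = {x \<in> vecs n. \<forall>c\<in>C. f c = tr p r (dotp n c x)}"

definition DTheta :: "nat \<Rightarrow> nat \<Rightarrow> nat \<Rightarrow> nat \<Rightarrow> (nat \<Rightarrow> 'a::field) set \<Rightarrow> ('b \<Rightarrow> (nat \<Rightarrow> 'a) \<Rightarrow> 'a)
     \<Rightarrow> (nat \<Rightarrow> 'b) set \<Rightarrow> (nat \<Rightarrow> 'a) set" where
  "DTheta p r n m C \<kappa> D = (\<Union>\<Lambda>\<in>D. {X \<in> vecs (n * m). \<forall>i<m. block n i X \<in> Theta p r n C (\<kappa> (\<Lambda> i))})"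

definition ell :: "nat \<Rightarrow> nat \<Rightarrow> nat \<Rightarrow> nat \<Rightarrow> (nat \<Rightarrow> 'a::field) set \<Rightarrow> ('b \<Rightarrow> (nat \<Rightarrow> 'a) \<Rightarrow> 'a)
     \<Rightarrow> (nat \<Rightarrow> 'b) set \<Rightarrow> nat" where
  "ell p r n m C \<kappa> D = Min (hw (n * m) ` (DTheta p r n m C \<kappa> D - blocks_in n m (dual n C)))"

text \<open>Quantum states in (C^q)^(tensor N): coefficient functions on F_q^N.\<close>
type_synonym 'a qstate = "(nat \<Rightarrow> 'a) \<Rightarrow> complex"

definition Hsp :: "nat \<Rightarrow> 'a::zero qstate set" where
  "Hsp N = {\<psi>. \<forall>x. x \<notin> vecs N \<longrightarrow> \<psi> x = 0}"

definition cscale :: "complex \<Rightarrow> 'a qstate \<Rightarrow> 'a qstate" where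
  "cscale c \<psi> = (\<lambda>x. c * \<psi> x)"

definition phi :: "nat \<Rightarrow> nat \<Rightarrow> (nat \<Rightarrow> 'a::{field,finite}) set \<Rightarrow> ((nat \<Rightarrow> 'a) \<Rightarrow> 'a) \<Rightarrow> 'a qstate" where
  "phi p k C f = (\<lambda>x. if x \<in> C
      then complex_of_real (1 / sqrt (real (CARD('a) ^ k))) * zpow p (f x) else 0)"

definition Phi :: "nat \<Rightarrow> nat \<Rightarrow> nat \<Rightarrow> (nat \<Rightarrow> 'a::{field,finite}) set \<Rightarrow> ('b \<Rightarrow> (nat \<Rightarrow> 'a) \<Rightarrow> 'a)
     \<Rightarrow> (nat \<Rightarrow> 'b) \<Rightarrow> 'a qstate" where
  "Phi p n m C \<kappa> \<Lambda> = (\<lambda>X. if X \<in> vecs (n * m)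
      then (\<Prod>i<m. phi p (code_dim C) C (\<kappa> (\<Lambda> i)) (block n i X)) else 0)"

definition FLam :: "nat \<Rightarrow> nat \<Rightarrow> ('b \<Rightarrow> (nat \<Rightarrow> 'a) \<Rightarrow> 'a::field) \<Rightarrow> (nat \<Rightarrow> 'b) \<Rightarrow> (nat \<Rightarrow> 'a) \<Rightarrow> 'a" where
  "FLam n m \<kappa> \<Lambda> X = (\<Sum>i<m. \<kappa> (\<Lambda> i) (block n i X))"

definition phases :: "nat \<Rightarrow> complex set" where
  "phases p = (if p = 2 then {\<i> ^ c | c. c < 4} else {zeta p ^ c | c. c < p})"

text \<open>The operator w X(a) Z(b) on (C^q)^(tensor N): X(a)Z(b)|x> = zeta^tr(b.x) |x+a>.\<close>
definition pauli :: "nat \<Rightarrow> nat \<Rightarrow> nat \<Rightarrow> complex \<Rightarrow> (nat \<Rightarrow> 'a::field) \<Rightarrow> (nat \<Rightarrow> 'a)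
     \<Rightarrow> 'a qstate \<Rightarrow> 'a qstate" where
  "pauli p r N w a b = (\<lambda>\<psi> y. w * zpow p (tr p r (dotp N b (y - a))) * \<psi> (y - a))"

definition PG :: "nat \<Rightarrow> nat \<Rightarrow> nat \<Rightarrow> ('a::field qstate \<Rightarrow> 'a qstate) set" where
  "PG p r N = {pauli p r N w a b | w a b. w \<in> phases p \<and> a \<in> vecs N \<and> b \<in> vecs N}"

definition pweight :: "nat \<Rightarrow> nat \<Rightarrow> nat \<Rightarrow> ('a::field qstate \<Rightarrow> 'a qstate) \<Rightarrow> nat" where
  "pweight p r N E = (LEAST t. \<exists>w a b. w \<in> phases p \<and> a \<in> vecs N \<and> b \<in> vecs N
        \<and> E = pauli p r N w a b \<and> t = card {j. j < N \<and> (a j \<noteq> 0 \<or> b j \<noteq> 0)})"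

definition centralizer :: "('x \<Rightarrow> 'x) set \<Rightarrow> ('x \<Rightarrow> 'x) set \<Rightarrow> ('x \<Rightarrow> 'x) set" where
  "centralizer G S = {E \<in> G. \<forall>F\<in>S. E \<circ> F = F \<circ> E}"

definition center :: "('x \<Rightarrow> 'x) set \<Rightarrow> ('x \<Rightarrow> 'x) set" where
  "center G = centralizer G G"

definition setprod :: "('x \<Rightarrow> 'x) set \<Rightarrow> ('x \<Rightarrow> 'x) set \<Rightarrow> ('x \<Rightarrow> 'x) set" where
  "setprod A B = {E \<circ> F | E F. E \<in> A \<and> F \<in> B}"

definition Stab :: "nat \<Rightarrow> nat \<Rightarrow> nat \<Rightarrow> 'a::field qstate set \<Rightarrow> ('a qstate \<Rightarrow> 'a qstate) set" where
  "Stab p r N Q = {E \<in> PG p r N. \<forall>v\<in>Q. E v = v}"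

definition is_stabilizer_code :: "nat \<Rightarrow> nat \<Rightarrow> nat \<Rightarrow> 'a::field qstate set \<Rightarrow> bool" where
  "is_stabilizer_code p r N Q \<longleftrightarrow> Q \<subseteq> Hsp N \<and> module.subspace cscale Q
     \<and> Q = {v \<in> Hsp N. \<forall>E\<in>Stab p r N Q. E v = v}"

definition stab_min_dist :: "nat \<Rightarrow> nat \<Rightarrow> nat \<Rightarrow> 'a::field qstate set \<Rightarrow> nat" where
  "stab_min_dist p r N Q =
    (let S = Stab p r N Q; Cs = centralizer (PG p r N) S; SZ = setprod S (center (PG p r N)) in
     if SZ = Cs then Min (pweight p r N ` (S - {id}))
     else Min (pweight p r N ` (Cs - SZ)))"

end

(* Up to the factor q^(-km/2), the state Phi_Lambda is the additive character
   x |-> zeta^(F_Lambda x) of C^m, and Lambda |-> F_Lambda is injective; so the Phi_Lambda are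
   orthogonal and Q has dimension |D| = q^(ks).

   Writing K for the common kernel of the F_Lambda, an operator w X(a) Z(b) fixes every Phi_Lambda
   iff w = 1, a is in K and b is in (C^perp)^m.  Conversely a state fixed by all these operators is
   supported on C^m and invariant under translation by K, so by Fourier inversion on C^m it is a
   combination of the characters of C^m that are trivial on K; by duality of finite abelian groups
   these are exactly the zeta^(F_Lambda).

   Two Pauli operators commute iff tr(b.a') = tr(b'.a).  Hence the centralizer consists of the
   w X(U) Z(V) with U trace-orthogonal to (C^perp)^m, i.e. U in C^m, and V trace-orthogonal to K,
   which is exactly D^Theta.  An element outside S Z(P) either has U not in K, and then some block
   of U is a nonzero codeword of C, or has V in D^Theta but not in (C^perp)^m; this gives the lower
   bound min(d(C), l), attained by a minimum-weight codeword placed in the first block and by a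
   minimum-weight element of D^Theta outside (C^perp)^m. *)

theory Submission
  imports Defs "HOL-Computational_Algebra.Polynomial" "HOL-Number_Theory.Cong"
begin

section \<open>Finite fields, vectors and codes\<close>

lemma of_nat_card_eq_0: "of_nat CARD('a::{ring_1,finite}) = (0 :: 'a)"
proof -
  have "(\<Sum>x\<in>UNIV. x + 1) = (\<Sum>x\<in>UNIV. x :: 'a)"
    by (rule sum.reindex_bij_witness[of _ "\<lambda>x. x - 1" "\<lambda>x. x + 1"]) auto
  then show ?thesis
    by (simp add: sum.distrib)
qed

lemma CHAR_dvd_card: "CHAR('a::{ring_1,finite}) dvd CARD('a)"
  using of_nat_card_eq_0 of_nat_eq_0_iff_char_dvd by blast

lemma power_card_eq_self:
  fixes x :: "'a::{field,finite}"
  shows "x ^ CARD('a) = x"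
proof (cases "x = 0")
  case False
  let ?U = "UNIV - {0 :: 'a}"
  have "(\<Prod>y\<in>?U. x * y) = (\<Prod>y\<in>?U. y)"
    using False by (intro prod.reindex_bij_witness[of _ "\<lambda>y. y / x" "\<lambda>y. x * y"]) auto
  then have "x ^ card ?U * (\<Prod>y\<in>?U. y) = 1 * (\<Prod>y\<in>?U. y)"
    by (simp add: prod.distrib)
  then have "x ^ (CARD('a) - 1) = 1"
    by (simp add: card_Diff_singleton)
  moreover have "CARD('a) = Suc (CARD('a) - 1)"
    using finite_UNIV_card_ge_0[where 'a='a] by simp
  ultimately show ?thesis
    by (metis power_Suc mult.right_neutral)
qed (simp add: finite_UNIV_card_ge_0)

lemma zeta_power_eq_1_iff:
  assumes "p > 0"
  shows "zeta p ^ j = 1 \<longleftrightarrow> p dvd j"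
proof -
  have "zeta p ^ j = cis (real j * (2 * pi / real p))"
    unfolding zeta_def by (rule Complex.DeMoivre)
  then have zeta_power: "zeta p ^ j = cis (2 * pi * real j / real p)"
    by (simp add: field_simps)
  show ?thesis
  proof
    assume "p dvd j"
    then obtain t where "j = p * t" by auto
    then have "2 * pi * real j / real p = 2 * pi * real t"
      using assms by (simp add: field_simps)
    then show "zeta p ^ j = 1"
      unfolding zeta_power by (simp add: Ints_of_nat)
  next
    assume "zeta p ^ j = 1"
    then have "exp (\<i> * complex_of_real (2 * pi * real j / real p)) = 1"
      unfolding zeta_power cis_conv_exp by simp
    then obtain t :: int where "2 * pi * real j / real p = of_int (2 * t) * pi"
      unfolding exp_eq_1 by auto
    then have "real j = real p * of_int t"
      using assms by (simp add: field_simps)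
    then have "int j = int p * t"
      by (metis of_int_eq_iff of_int_mult of_int_of_nat_eq)
    then show "p dvd j"
      by (metis dvd_triv_left int_dvd_int_iff)
  qed
qed

lemma vecs_add [simp]: "x \<in> vecs N \<Longrightarrow> y \<in> vecs N \<Longrightarrow> (x :: nat \<Rightarrow> 'a::monoid_add) + y \<in> vecs N"
  by (simp add: vecs_def)

lemma vecs_diff [simp]: "x \<in> vecs N \<Longrightarrow> y \<in> vecs N \<Longrightarrow> (x :: nat \<Rightarrow> 'a::ab_group_add) - y \<in> vecs N"
  by (simp add: vecs_def)

lemma vecs_zero [simp]: "0 \<in> vecs N"
  by (simp add: vecs_def)

lemma finite_vecs: "finite (vecs N :: (nat \<Rightarrow> 'a::{zero,finite}) set)"
proof -
  have "vecs N = {f :: nat \<Rightarrow> 'a. \<forall>x. (x \<in> {..<N} \<longrightarrow> f x \<in> UNIV) \<and> (x \<notin> {..<N} \<longrightarrow> f x = 0)}"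
    by (auto simp: vecs_def)
  then show ?thesis
    using finite_set_of_finite_funs[of "{..<N}" "UNIV :: 'a set" 0] by simp
qed

lemma dotp_add_left: "dotp N (x + y) z = dotp N x z + dotp N y z"
  by (simp add: dotp_def sum.distrib algebra_simps)

lemma dotp_add_right: "dotp N z (x + y) = dotp N z x + dotp N z y"
  by (simp add: dotp_def sum.distrib algebra_simps)

lemma dotp_diff_left: "dotp N (x - y) z = dotp N x z - dotp N y z"
  by (simp add: dotp_def sum_subtractf algebra_simps)

lemma dotp_diff_right: "dotp N z (x - y) = dotp N z x - dotp N z y"
  by (simp add: dotp_def sum_subtractf algebra_simps)

lemma dotp_zero_left [simp]: "dotp N 0 x = 0"
  by (simp add: dotp_def)

lemma dotp_zero_right [simp]: "dotp N x 0 = 0"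
  by (simp add: dotp_def)

lemma dotp_commute: "dotp N x y = dotp N y x"
  by (simp add: dotp_def mult.commute)

lemma dotp_vscale_left: "dotp N (vscale c x) y = c * dotp N x y"
  by (simp add: dotp_def vscale_def sum_distrib_left mult.assoc)

lemma vecs_nonzero_entry: "v \<in> vecs N \<Longrightarrow> v \<noteq> 0 \<Longrightarrow> \<exists>j<N. v j \<noteq> 0"
  by (auto simp: vecs_def fun_eq_iff) (meson not_less)

lemma block_add: "block n i (X + Y) = block n i X + block n i (Y :: nat \<Rightarrow> 'a::monoid_add)"
  by (auto simp: block_def fun_eq_iff)

lemma block_diff: "block n i (X - Y) = block n i X - block n i (Y :: nat \<Rightarrow> 'a::ab_group_add)"
  by (auto simp: block_def fun_eq_iff)

lemma block_zero [simp]: "block n i 0 = 0"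
  by (auto simp: block_def)

lemma block_in_vecs [simp]: "block n i X \<in> vecs n"
  by (auto simp: block_def vecs_def)

lemma block_index_less:
  fixes i m t n :: nat
  assumes "i < m" "t < n"
  shows "i * n + t < n * m"
proof -
  have "i * n + t < Suc i * n"
    using assms(2) by simp
  also have "\<dots> \<le> m * n"
    using assms(1) by (intro mult_le_mono1) simp
  finally show ?thesis
    by (simp add: mult.commute)
qed

definition embed_block :: "nat \<Rightarrow> nat \<Rightarrow> (nat \<Rightarrow> 'a::zero) \<Rightarrow> nat \<Rightarrow> 'a" where
  "embed_block n i x = (\<lambda>j. if i * n \<le> j \<and> j < i * n + n then x (j - i * n) else 0)"

lemma embed_block_in_vecs:
  assumes "i < m"
  shows "embed_block n i x \<in> vecs (n * m)"
proof -
  have "i * n + n \<le> n * m"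
    using mult_le_mono1[of "Suc i" m n] assms by (simp add: mult.commute)
  then show ?thesis
    by (auto simp: embed_block_def vecs_def)
qed

lemma block_embed_block:
  assumes "x \<in> vecs n"
  shows "block n i' (embed_block n i x) = (if i' = i then x else 0)"
proof (rule ext)
  fix t
  show "block n i' (embed_block n i x) t = (if i' = i then x else 0) t"
  proof (cases "t < n")
    case True
    have "i * n \<le> i' * n + t \<and> i' * n + t < i * n + n \<longleftrightarrow> i' = i"
    proof
      assume "i * n \<le> i' * n + t \<and> i' * n + t < i * n + n"
      then have "i * n < (i' + 1) * n" "i' * n < (i + 1) * n"
        using True by (auto simp: algebra_simps)
      then have "i < i' + 1" "i' < i + 1"
        using mult_less_cancel2 by blast+
      then show "i' = i"
        by simp
    qed (use True in auto)
    then show ?thesis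
      using True by (auto simp: block_def embed_block_def)
  next
    case False
    then show ?thesis
      using assms by (auto simp: block_def vecs_def)
  qed
qed

lemma sum_lessThan_mult_blocks:
  fixes g :: "nat \<Rightarrow> 'a::comm_monoid_add"
  shows "(\<Sum>j<n * m. g j) = (\<Sum>i<m. \<Sum>t<n. g (i * n + t))"
proof -
  have "(\<Sum>j<n * m. g j) = (\<Sum>i<m. sum g {i * n..<i * n + n})"
    using sum.nat_group[where g=g and k=n and n=m] by (simp add: mult.commute)
  also have "\<dots> = (\<Sum>i<m. \<Sum>t<n. g (i * n + t))"
  proof (rule sum.cong[OF refl])
    fix i
    have "sum g {0 + i * n..<n + i * n} = (\<Sum>t = 0..<n. g (t + i * n))"
      by (rule sum.shift_bounds_nat_ivl)
    then show "sum g {i * n..<i * n + n} = (\<Sum>t<n. g (i * n + t))"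
      by (simp add: add.commute atLeast0LessThan)
  qed
  finally show ?thesis .
qed

lemma dotp_blocks: "dotp (n * m) b x = (\<Sum>i<m. dotp n (block n i b) (block n i x))"
  unfolding dotp_def sum_lessThan_mult_blocks by (auto simp: block_def intro!: sum.cong)

lemma dotp_embed_block:
  assumes "i < m" "c \<in> vecs n"
  shows "dotp (n * m) b (embed_block n i c) = dotp n (block n i b) c"
proof -
  have "dotp (n * m) b (embed_block n i c) = (\<Sum>i'<m. if i' = i then dotp n (block n i' b) c else 0)"
    unfolding dotp_blocks block_embed_block[OF assms(2)] by (intro sum.cong) auto
  then show ?thesis
    using assms(1) by simp
qed

lemma eq_0_if_blocks_eq_0:
  assumes "X \<in> vecs (n * m)" "\<forall>i<m. block n i X = 0"
  shows "X = 0"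
proof (rule ext)
  fix j
  show "X j = 0 j"
  proof (cases "j < n * m")
    case True
    then have "n > 0"
      by (cases n) auto
    with True have "j div n < m"
      by (simp add: div_less_iff_less_mult mult.commute)
    have "X ((j div n) * n + j mod n) = block n (j div n) X (j mod n)"
      using \<open>n > 0\<close> by (simp add: block_def)
    also have "\<dots> = 0"
      using assms(2) \<open>j div n < m\<close> by simp
    finally show ?thesis
      by simp
  next
    case False
    then show ?thesis
      using assms(1) by (simp add: vecs_def)
  qed
qed

definition concat_blocks :: "nat \<Rightarrow> nat \<Rightarrow> (nat \<Rightarrow> nat \<Rightarrow> 'a::zero) \<Rightarrow> nat \<Rightarrow> 'a" where
  "concat_blocks n m xs = (\<lambda>j. if j < n * m then xs (j div n) (j mod n) else 0)"

lemma concat_blocks_in_vecs: "concat_blocks n m xs \<in> vecs (n * m)"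
  by (simp add: concat_blocks_def vecs_def)

lemma block_concat_blocks:
  assumes "i < m" "xs i \<in> vecs n"
  shows "block n i (concat_blocks n m xs) = xs i"
proof
  fix t
  show "block n i (concat_blocks n m xs) t = xs i t"
  proof (cases "t < n")
    case True
    then show ?thesis
      using block_index_less[OF assms(1) True] by (simp add: block_def concat_blocks_def)
  next
    case False
    then show ?thesis
      using assms(2) by (simp add: block_def vecs_def)
  qed
qed

lemma hw_embed_block_0:
  assumes "0 < m"
  shows "hw (n * m) (embed_block n 0 c) = hw n c"
proof -
  have "n \<le> n * m"
    using assms by simp
  then show ?thesis
    unfolding hw_def embed_block_def by (intro arg_cong[where f = card]) (auto intro: order.strict_trans2)
qed

lemma hw_block_le:
  assumes "i < m"
  shows "hw n (block n i U) \<le> card {j. j < n * m \<and> (U j \<noteq> 0 \<or> V j \<noteq> 0)}"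
proof -
  have "hw n (block n i U) = card ((\<lambda>t. i * n + t) ` {t. t < n \<and> block n i U t \<noteq> 0})"
    unfolding hw_def by (subst card_image) (auto simp: inj_on_def)
  also have "\<dots> \<le> card {j. j < n * m \<and> (U j \<noteq> 0 \<or> V j \<noteq> 0)}"
  proof (rule card_mono)
    show "(\<lambda>t. i * n + t) ` {t. t < n \<and> block n i U t \<noteq> 0}
        \<subseteq> {j. j < n * m \<and> (U j \<noteq> 0 \<or> V j \<noteq> 0)}"
      using block_index_less[OF assms] by (auto simp: block_def split: if_splits)
  qed simp
  finally show ?thesis .
qed

lemma module_vscale: "module (vscale :: 'f::field \<Rightarrow> (nat \<Rightarrow> 'f) \<Rightarrow> _)"
  by unfold_locales (auto simp: vscale_def fun_eq_iff algebra_simps)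

lemma vector_space_vscale: "vector_space (vscale :: 'f::field \<Rightarrow> (nat \<Rightarrow> 'f) \<Rightarrow> _)"
  using module_vscale unfolding vector_space_def module_def .

lemma module_cscale: "module (cscale :: complex \<Rightarrow> 'x qstate \<Rightarrow> _)"
  by unfold_locales (auto simp: cscale_def fun_eq_iff algebra_simps)

lemma vector_space_cscale: "vector_space (cscale :: complex \<Rightarrow> 'x qstate \<Rightarrow> _)"
  using module_cscale unfolding vector_space_def module_def .

lemma sum_cscale_apply: "finite A \<Longrightarrow> (\<Sum>i\<in>A. cscale (c i) (f i)) y = (\<Sum>i\<in>A. c i * f i y)"
  by (induction A rule: finite_induct) (auto simp: cscale_def)

lemma subspace_Hsp: "module.subspace cscale (Hsp N :: 'a::zero qstate set)"
  unfolding module.subspace_def[OF module_cscale] by (auto simp: Hsp_def cscale_def)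

lemma (in vector_space) bij_betw_linear_combinations:
  assumes "finite B" "independent B"
  shows "bij_betw (\<lambda>u. \<Sum>v\<in>B. scale (u v) v) (B \<rightarrow>\<^sub>E UNIV) (span B)"
proof (rule bij_betw_imageI)
  let ?comb = "\<lambda>u. \<Sum>v\<in>B. scale (u v) v"
  show "inj_on ?comb (B \<rightarrow>\<^sub>E UNIV)"
  proof (rule inj_onI)
    fix u u' assume u: "u \<in> B \<rightarrow>\<^sub>E UNIV" and u': "u' \<in> B \<rightarrow>\<^sub>E UNIV" and eq: "?comb u = ?comb u'"
    have "(\<Sum>v\<in>B. scale (u v - u' v) v) = ?comb u - ?comb u'"
      by (simp add: scale_left_diff_distrib sum_subtractf)
    then have "(\<Sum>v\<in>B. scale (u v - u' v) v) = 0"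
      using eq by simp
    then have "u v = u' v" if "v \<in> B" for v
      using independentD[OF assms(2,1) subset_refl, of "\<lambda>v. u v - u' v"] that by simp
    then show "u = u'"
      using u u' by (intro PiE_ext) auto
  qed
  show "?comb ` (B \<rightarrow>\<^sub>E UNIV) = span B"
  proof
    show "?comb ` (B \<rightarrow>\<^sub>E UNIV) \<subseteq> span B"
      using span_finite[OF assms(1)] by auto
    show "span B \<subseteq> ?comb ` (B \<rightarrow>\<^sub>E UNIV)"
    proof
      fix d assume "d \<in> span B"
      then obtain u where "d = ?comb u"
        using span_finite[OF assms(1)] by auto
      moreover have "?comb (restrict u B) = ?comb u"
        by (intro sum.cong) auto
      moreover have "restrict u B \<in> B \<rightarrow>\<^sub>E UNIV"
        by simp
      ultimately show "d \<in> ?comb ` (B \<rightarrow>\<^sub>E UNIV)"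
        by (intro image_eqI[of _ _ "restrict u B"]) simp_all
    qed
  qed
qed

lemma (in vector_space) card_subspace:
  assumes "subspace V" "finite V"
  shows "card V = CARD('a) ^ dim V"
proof -
  obtain B where B: "B \<subseteq> V" "independent B" "V \<subseteq> span B" "card B = dim V"
    using basis_exists by blast
  have "finite B"
    using B(1) assms(2) finite_subset by blast
  have "span B = V"
    using B(1,3) span_minimal[OF _ assms(1)] by blast
  then have "card V = card (B \<rightarrow>\<^sub>E (UNIV :: 'a set))"
    using bij_betw_same_card[OF bij_betw_linear_combinations[OF \<open>finite B\<close> B(2)]] by simp
  also have "\<dots> = CARD('a) ^ card B"
    using card_PiE[OF \<open>finite B\<close>, of "\<lambda>_. UNIV :: 'a set"] by simp
  finally show ?thesis
    using B(4) by simp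
qed

lemma lin_code_subspace: "lin_code N V \<Longrightarrow> module.subspace vscale V"
  by (simp add: lin_code_def)

lemma lin_code_subset_vecs: "lin_code N V \<Longrightarrow> V \<subseteq> vecs N"
  by (simp add: lin_code_def)

lemma lin_code_zero: "lin_code N V \<Longrightarrow> 0 \<in> V"
  using module.subspace_0[OF module_vscale] lin_code_subspace by blast

lemma lin_code_add: "lin_code N V \<Longrightarrow> x \<in> V \<Longrightarrow> y \<in> V \<Longrightarrow> x + y \<in> V"
  using module.subspace_add[OF module_vscale] lin_code_subspace by blast

lemma lin_code_vscale: "lin_code N V \<Longrightarrow> x \<in> V \<Longrightarrow> vscale c x \<in> V"
  using module.subspace_scale[OF module_vscale] lin_code_subspace by blast

lemma lin_code_diff: "lin_code N V \<Longrightarrow> x \<in> V \<Longrightarrow> y \<in> V \<Longrightarrow> x - y \<in> V"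
  using module.subspace_diff[OF module_vscale] lin_code_subspace by blast

lemma finite_lin_code: "lin_code N (V :: (nat \<Rightarrow> 'a::{field,finite}) set) \<Longrightarrow> finite V"
  using finite_subset[OF lin_code_subset_vecs finite_vecs] .

lemma card_lin_code: "lin_code N (V :: (nat \<Rightarrow> 'a::{field,finite}) set) \<Longrightarrow> card V = CARD('a) ^ code_dim V"
  unfolding code_dim_def
  by (rule vector_space.card_subspace[OF vector_space_vscale lin_code_subspace finite_lin_code])

lemma lin_code_nonzero:
  fixes V :: "(nat \<Rightarrow> 'a::{field,finite}) set"
  assumes "lin_code N V" "code_dim V \<ge> 1"
  obtains v where "v \<in> V" "v \<noteq> 0"
proof -
  have "2 \<le> CARD('a)"
    using card_mono[of UNIV "{0::'a, 1}"] by simp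
  also have "\<dots> = CARD('a) ^ 1"
    by simp
  also have "\<dots> \<le> card V"
    unfolding card_lin_code[OF assms(1)] using assms(2) by (intro power_increasing) simp_all
  finally have "\<not> V \<subseteq> {0}"
    using card_mono[of "{0}" V] by auto
  then show ?thesis
    using that by blast
qed

lemma finite_hw_differences:
  assumes "finite V"
  shows "finite {hw N (x - y) | x y. x \<in> V \<and> y \<in> V \<and> x \<noteq> y}"
proof -
  have "{hw N (x - y) | x y. x \<in> V \<and> y \<in> V \<and> x \<noteq> y} \<subseteq> (\<lambda>(x, y). hw N (x - y)) ` (V \<times> V)"
    by auto
  then show ?thesis
    using assms by (meson finite_SigmaI finite_imageI finite_subset)
qed

lemma min_dist_le_hw:
  fixes V :: "(nat \<Rightarrow> 'a::{field,finite}) set"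
  assumes "lin_code N V" "c \<in> V" "c \<noteq> 0"
  shows "min_dist N V \<le> hw N c"
proof -
  have "finite {hw N (x - y) | x y. x \<in> V \<and> y \<in> V \<and> x \<noteq> y}"
    using finite_hw_differences[OF finite_lin_code[OF assms(1)]] .
  then show ?thesis
    unfolding min_dist_def using assms lin_code_zero[OF assms(1)] by (intro Min_le) force+
qed

lemma min_dist_attained:
  fixes V :: "(nat \<Rightarrow> 'a::{field,finite}) set"
  assumes "lin_code N V" "code_dim V \<ge> 1"
  obtains c where "c \<in> V" "c \<noteq> 0" "hw N c = min_dist N V"
proof -
  let ?W = "{hw N (x - y) | x y. x \<in> V \<and> y \<in> V \<and> x \<noteq> y}"
  have "finite ?W"
    using finite_hw_differences[OF finite_lin_code[OF assms(1)]] .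
  moreover obtain v where "v \<in> V" "v \<noteq> 0"
    using lin_code_nonzero[OF assms] .
  then have "?W \<noteq> {}"
    using lin_code_zero[OF assms(1)] by force
  ultimately have "min_dist N V \<in> ?W"
    unfolding min_dist_def by (rule Min_in)
  then obtain x y where "x \<in> V" "y \<in> V" "x \<noteq> y" "min_dist N V = hw N (x - y)"
    by blast
  then show ?thesis
    using that[of "x - y"] lin_code_diff[OF assms(1)] by simp
qed

section \<open>The field \<open>F_q\<close>, its trace and its canonical additive character\<close>

locale prime_power_field =
  fixes p r :: nat and \<epsilon> :: "'a::{field,finite} \<Rightarrow> complex"
  assumes prime_p: "prime p" and r_pos: "1 \<le> r" and card_field: "CARD('a) = p ^ r"
  defines "\<epsilon> \<equiv> \<lambda>x. zpow p (tr p r x)"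
begin

lemma p_gt_1: "p > 1"
  using prime_p prime_gt_1_nat by blast

lemma CHAR_eq: "CHAR('a) = p"
proof -
  have "CHAR('a) > 0"
    by (rule finite_imp_CHAR_pos) simp
  then have CHAR_prime: "prime CHAR('a)"
    by (rule prime_CHAR_semidom)
  moreover have "CHAR('a) dvd p ^ r"
    using CHAR_dvd_card card_field by metis
  then have "CHAR('a) dvd p"
    using CHAR_prime prime_dvd_power by blast
  ultimately show ?thesis
    using prime_p by (simp add: primes_dvd_imp_eq)
qed

lemma prime_CHAR: "prime CHAR('a)"
  using prime_p by (simp add: CHAR_eq)

lemma of_nat_eq_iff_mod: "(of_nat a :: 'a) = of_nat b \<longleftrightarrow> a mod p = b mod p"
  using of_nat_eq_iff_cong_CHAR[where 'a='a] by (simp add: CHAR_eq cong_def)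

lemma of_nat_in_Fp [simp]: "(of_nat j :: 'a) \<in> Fp p"
  unfolding Fp_def using p_gt_1 by (auto intro!: exI[of _ "j mod p"] simp: of_nat_eq_iff_mod)

lemma FpE:
  assumes "(x :: 'a) \<in> Fp p"
  obtains j where "x = of_nat j"
  using assms unfolding Fp_def by auto

lemma Fp_zero [simp]: "(0 :: 'a) \<in> Fp p"
  using of_nat_in_Fp[of 0] by simp

lemma Fp_add [simp]: "(x :: 'a) \<in> Fp p \<Longrightarrow> y \<in> Fp p \<Longrightarrow> x + y \<in> Fp p"
  by (metis FpE of_nat_in_Fp of_nat_add)

lemma Fp_uminus [simp]:
  assumes "(x :: 'a) \<in> Fp p"
  shows "- x \<in> Fp p"
proof -
  obtain j where j: "x = of_nat j"
    using assms FpE by blast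
  have "(of_nat (p * j - j) :: 'a) = of_nat (p * j) - of_nat j"
    using p_gt_1 by (simp add: of_nat_diff)
  also have "(of_nat (p * j) :: 'a) = 0"
    by (simp add: of_nat_eq_0_iff_char_dvd CHAR_eq)
  finally show ?thesis
    using j of_nat_in_Fp[of "p * j - j"] by simp
qed

lemma Fp_diff [simp]: "(x :: 'a) \<in> Fp p \<Longrightarrow> y \<in> Fp p \<Longrightarrow> x - y \<in> Fp p"
  using Fp_add[of x "- y"] by simp

lemma Fp_sum [simp]: "(\<And>i. i \<in> I \<Longrightarrow> (f i :: 'a) \<in> Fp p) \<Longrightarrow> sum f I \<in> Fp p"
  by (induction I rule: infinite_finite_induct) auto

lemma card_Fp: "card (Fp p :: 'a set) = p"
proof -
  have "(Fp p :: 'a set) = of_nat ` {..<p}"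
    unfolding Fp_def by auto
  moreover have "inj_on (of_nat :: nat \<Rightarrow> 'a) {..<p}"
    by (auto simp: inj_on_def of_nat_eq_iff_mod)
  ultimately show ?thesis
    by (simp add: card_image)
qed

lemma zpow_of_nat: "zpow p (of_nat j :: 'a) = zeta p ^ j"
proof -
  have "(THE j'. j' < p \<and> (of_nat j' :: 'a) = of_nat j) = j mod p"
    using p_gt_1 by (intro the_equality) (auto simp: of_nat_eq_iff_mod)
  then have "zpow p (of_nat j :: 'a) = zeta p ^ (j mod p)"
    unfolding zpow_def by simp
  also have "\<dots> = zeta p ^ j"
  proof -
    have "zeta p ^ j = zeta p ^ (j mod p) * (zeta p ^ p) ^ (j div p)"
      by (metis mod_mult_div_eq power_add power_mult)
    then show ?thesis
      using zeta_power_eq_1_iff[of p p] p_gt_1 by simp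
  qed
  finally show ?thesis .
qed

lemma zpow_add: "(x :: 'a) \<in> Fp p \<Longrightarrow> y \<in> Fp p \<Longrightarrow> zpow p (x + y) = zpow p x * zpow p y"
  by (metis FpE of_nat_add power_add zpow_of_nat)

lemma zpow_zero [simp]: "zpow p (0 :: 'a) = 1"
  using zpow_of_nat[of 0] by simp

lemma zpow_nonzero [simp]: "zpow p (x :: 'a) \<noteq> 0"
  by (simp add: zpow_def zeta_def)

lemma zpow_eq_1_iff:
  assumes "(x :: 'a) \<in> Fp p"
  shows "zpow p x = 1 \<longleftrightarrow> x = 0"
proof -
  obtain j where j: "x = of_nat j"
    using assms FpE by blast
  have "zpow p x = 1 \<longleftrightarrow> p dvd j"
    using j zpow_of_nat zeta_power_eq_1_iff p_gt_1 by simp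
  also have "\<dots> \<longleftrightarrow> x = 0"
    using j of_nat_eq_0_iff_char_dvd[where 'a='a] CHAR_eq by simp
  finally show ?thesis .
qed

lemma zpow_diff: "(x :: 'a) \<in> Fp p \<Longrightarrow> y \<in> Fp p \<Longrightarrow> zpow p (x - y) = zpow p x * zpow p (- y)"
  using zpow_add[of x "- y"] by simp

lemma zpow_sum:
  "finite I \<Longrightarrow> (\<And>i. i \<in> I \<Longrightarrow> (f i :: 'a) \<in> Fp p) \<Longrightarrow> zpow p (sum f I) = (\<Prod>i\<in>I. zpow p (f i))"
  by (induction I rule: finite_induct) (auto simp: zpow_add)

lemma zpow_eq_iff:
  assumes "(x :: 'a) \<in> Fp p" "y \<in> Fp p"
  shows "zpow p x = zpow p y \<longleftrightarrow> x = y"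
proof
  assume "zpow p x = zpow p y"
  moreover have "zpow p (- y) * zpow p y = 1"
    using zpow_add[of "- y" y] assms by simp
  ultimately have "zpow p (x - y) = 1"
    using assms by (simp add: zpow_diff mult.commute)
  then show "x = y"
    using zpow_eq_1_iff[of "x - y"] assms by simp
qed simp

lemma power_p_power_add: "((x :: 'a) + y) ^ (p ^ i) = x ^ (p ^ i) + y ^ (p ^ i)"
  using freshmans_dream'[OF prime_CHAR, of "p ^ i" i x y] CHAR_eq by simp

lemma Fp_power_p_power:
  assumes "(a :: 'a) \<in> Fp p"
  shows "a ^ (p ^ i) = a"
proof -
  obtain j where j: "a = of_nat j"
    using assms FpE by blast
  have "(of_nat j :: 'a) ^ (p ^ i) = of_nat j"
  proof (induction j)
    case (Suc j)
    then show ?case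
      using power_p_power_add[of "of_nat j" 1 i] by (simp add: add.commute)
  qed (use p_gt_1 in simp)
  then show ?thesis
    using j by simp
qed

text \<open>\<open>F_p\<close> consists of the \<open>p\<close> roots of \<open>X^p - X\<close>, so no other element is fixed by Frobenius.\<close>

lemma Fp_if_power_p_eq_self:
  assumes "(y :: 'a) ^ p = y"
  shows "y \<in> Fp p"
proof -
  define P :: "'a poly" where "P = Polynomial.monom 1 p + [:0, -1:]"
  have "degree P = p"
    unfolding P_def using p_gt_1 by (subst degree_add_eq_left) (auto simp: degree_monom_eq)
  then have "P \<noteq> 0"
    using p_gt_1 by auto
  have eval: "poly P x = x ^ p - x" for x
    unfolding P_def by (simp add: poly_monom)
  have sub: "Fp p \<subseteq> {x. poly P x = 0}"
    using Fp_power_p_power[of _ 1] eval by auto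
  have fin: "finite {x. poly P x = 0}"
    using poly_roots_finite[OF \<open>P \<noteq> 0\<close>] .
  have "card {x. poly P x = 0} \<le> p"
    using card_poly_roots_bound[OF \<open>P \<noteq> 0\<close>] \<open>degree P = p\<close> by simp
  then have "Fp p = {x. poly P x = 0}"
    using card_subset_eq[OF fin sub] card_Fp card_mono[OF fin sub] by simp
  then show ?thesis
    using assms eval by auto
qed

lemma tr_add: "tr p r ((x :: 'a) + y) = tr p r x + tr p r y"
  unfolding tr_def power_p_power_add by (simp add: sum.distrib)

lemma tr_zero [simp]: "tr p r (0 :: 'a) = 0"
  unfolding tr_def using p_gt_1 by (simp add: power_0_left)

lemma tr_diff: "tr p r ((x :: 'a) - y) = tr p r x - tr p r y"
  using tr_add[of "x - y" y] by (simp add: eq_diff_eq)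

lemma tr_sum: "tr p r (sum (f :: _ \<Rightarrow> 'a) I) = (\<Sum>i\<in>I. tr p r (f i))"
  by (induction I rule: infinite_finite_induct) (auto simp: tr_add)

lemma tr_mult_Fp: "(a :: 'a) \<in> Fp p \<Longrightarrow> tr p r (a * x) = a * tr p r x"
  unfolding tr_def by (simp add: power_mult_distrib Fp_power_p_power sum_distrib_left)

lemma tr_in_Fp [simp]: "tr p r (x :: 'a) \<in> Fp p"
proof (rule Fp_if_power_p_eq_self)
  have "tr p r x ^ p = (\<Sum>i<r. (x ^ (p ^ i)) ^ p)"
    unfolding tr_def by (rule freshmans_dream_sum[OF prime_CHAR CHAR_eq[symmetric]])
  also have "\<dots> = (\<Sum>i<r. x ^ (p ^ Suc i))"
    by (simp add: power_mult[symmetric] mult.commute)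
  also have "\<dots> = tr p r x"
  proof -
    have "(\<Sum>i<Suc r. x ^ (p ^ i)) = x ^ (p ^ 0) + (\<Sum>i<r. x ^ (p ^ Suc i))"
      by (rule sum.lessThan_Suc_shift)
    moreover have "x ^ (p ^ r) = x"
      using power_card_eq_self[of x] card_field by simp
    ultimately show ?thesis
      unfolding tr_def by simp
  qed
  finally show "tr p r x ^ p = tr p r x" .
qed

text \<open>The trace is a polynomial of degree \<open>p^(r-1) < q\<close> in \<open>x\<close>, so it cannot vanish on all of \<open>F_q\<close>.\<close>

lemma tr_nonzero: "\<exists>u :: 'a. tr p r u \<noteq> 0"
proof (rule ccontr)
  assume "\<not> (\<exists>u :: 'a. tr p r u \<noteq> 0)"
  then have all_roots: "{x. poly P x = 0} = UNIV" if "\<And>x. poly P x = tr p r x" for P :: "'a poly"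
    using that by auto
  define P :: "'a poly" where "P = (\<Sum>i<r. Polynomial.monom 1 (p ^ i))"
  have eval: "poly P x = tr p r x" for x
    unfolding P_def tr_def by (simp add: poly_sum poly_monom)
  have inj: "inj (\<lambda>i. p ^ i)"
    using p_gt_1 by (auto simp: inj_on_def)
  have "Polynomial.coeff P (p ^ (r - 1)) = (\<Sum>i<r. if p ^ i = p ^ (r - 1) then 1 else 0)"
    unfolding P_def coeff_sum by simp
  also have "\<dots> = (\<Sum>i\<in>{r - 1}. 1)"
    using r_pos inj[unfolded inj_on_def] by (intro sum.mono_neutral_cong_right) auto
  finally have "P \<noteq> 0"
    by auto
  have "degree P \<le> p ^ (r - 1)"
    unfolding P_def
  proof (rule degree_sum_le)
    fix i assume "i \<in> {..<r}"
    then have "p ^ i \<le> p ^ (r - 1)"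
      using p_gt_1 by (intro power_increasing) auto
    then show "degree (Polynomial.monom (1 :: 'a) (p ^ i)) \<le> p ^ (r - 1)"
      using degree_monom_le order.trans by blast
  qed simp
  moreover have "card {x. poly P x = 0} \<le> degree P"
    by (rule card_poly_roots_bound[OF \<open>P \<noteq> 0\<close>])
  moreover have "p ^ (r - 1) < p ^ r"
    using p_gt_1 r_pos by (simp add: power_strict_increasing)
  ultimately show False
    using all_roots[OF eval] card_field by simp
qed

lemma epsilon_add: "\<epsilon> (x + y) = \<epsilon> x * \<epsilon> y"
  by (simp add: \<epsilon>_def tr_add zpow_add)

lemma epsilon_eq_iff: "\<epsilon> x = \<epsilon> y \<longleftrightarrow> tr p r x = tr p r y"
  by (simp add: \<epsilon>_def zpow_eq_iff)

lemma epsilon_eq_1_iff: "\<epsilon> x = 1 \<longleftrightarrow> tr p r x = 0"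
  by (simp add: \<epsilon>_def zpow_eq_1_iff)

lemma epsilon_nonzero [simp]: "\<epsilon> x \<noteq> 0"
  by (simp add: \<epsilon>_def)

lemma epsilon_zero [simp]: "\<epsilon> 0 = 1"
  by (simp add: \<epsilon>_def)

lemma tr_dotp_nondegenerate:
  assumes "(v :: nat \<Rightarrow> 'a) \<in> vecs N" "\<forall>x\<in>vecs N. tr p r (dotp N v x) = 0"
  shows "v = 0"
proof (rule ccontr)
  assume "v \<noteq> 0"
  then obtain j where "j < N" "v j \<noteq> 0"
    using vecs_nonzero_entry[OF assms(1)] by blast
  obtain u :: 'a where "tr p r u \<noteq> 0"
    using tr_nonzero by blast
  define x where "x = (\<lambda>i. if i = j then u / v j else 0)"
  have "x \<in> vecs N"
    using \<open>j < N\<close> by (auto simp: x_def vecs_def)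
  moreover have "dotp N v x = u"
    using \<open>j < N\<close> \<open>v j \<noteq> 0\<close> unfolding dotp_def x_def
    by (simp add: if_distrib[of "\<lambda>t. v _ * t"] sum.delta' cong: if_cong)
  ultimately show False
    using assms(2) \<open>tr p r u \<noteq> 0\<close> by metis
qed

lemma sum_zpow_character_eq_0:
  fixes G :: "'g::ab_group_add set" and h :: "'g \<Rightarrow> 'a"
  assumes "finite G" and add_closed: "\<And>x y. x \<in> G \<Longrightarrow> y \<in> G \<Longrightarrow> x + y \<in> G"
    and additive: "\<And>x y. x \<in> G \<Longrightarrow> y \<in> G \<Longrightarrow> h (x + y) = h x + h y"
    and h_values: "\<And>x. x \<in> G \<Longrightarrow> h x \<in> Fp p"
    and "x0 \<in> G" "h x0 \<noteq> 0"
  shows "(\<Sum>x\<in>G. zpow p (h x)) = 0"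
proof -
  let ?S = "\<Sum>x\<in>G. zpow p (h x)"
  have "(\<lambda>x. x + x0) ` G = G"
    by (rule endo_inj_surj[OF \<open>finite G\<close>]) (use add_closed \<open>x0 \<in> G\<close> in \<open>auto simp: inj_on_def\<close>)
  then have "?S = (\<Sum>x\<in>(\<lambda>x. x + x0) ` G. zpow p (h x))"
    by simp
  also have "\<dots> = (\<Sum>x\<in>G. zpow p (h (x + x0)))"
    by (subst sum.reindex) (auto simp: inj_on_def)
  also have "\<dots> = (\<Sum>x\<in>G. zpow p (h x) * zpow p (h x0))"
    using \<open>x0 \<in> G\<close> by (intro sum.cong refl) (simp add: additive h_values zpow_add)
  also have "\<dots> = ?S * zpow p (h x0)"
    by (simp add: sum_distrib_right)
  finally have "?S * (zpow p (h x0) - 1) = 0"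
    by (simp add: algebra_simps)
  moreover have "zpow p (h x0) \<noteq> 1"
    using zpow_eq_1_iff[OF h_values[OF \<open>x0 \<in> G\<close>]] \<open>h x0 \<noteq> 0\<close> by simp
  ultimately show ?thesis
    by simp
qed

lemma sum_zpow_character:
  fixes G :: "'g::ab_group_add set" and h :: "'g \<Rightarrow> 'a"
  assumes "finite G" "\<And>x y. x \<in> G \<Longrightarrow> y \<in> G \<Longrightarrow> x + y \<in> G"
    and "\<And>x y. x \<in> G \<Longrightarrow> y \<in> G \<Longrightarrow> h (x + y) = h x + h y"
    and "\<And>x. x \<in> G \<Longrightarrow> h x \<in> Fp p"
  shows "(\<Sum>x\<in>G. zpow p (h x)) = (if \<forall>x\<in>G. h x = 0 then of_nat (card G) else 0)"
  using sum_zpow_character_eq_0[OF assms] by auto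

text \<open>An \<open>F_p\<close>-valued character \<open>g\<close> of \<open>G\<close> vanishing on the kernel of a pairing \<open>h\<close> is of the
  form \<open>h a\<close>: otherwise the double sum of \<open>\<zeta>^(h a x - g x)\<close> would vanish by orthogonality in \<open>x\<close>,
  whereas summing over \<open>a\<close> first shows it is \<open>|A|\<close> times the size of the kernel.\<close>

lemma character_represented_by_pairing:
  fixes A :: "'g::ab_group_add set" and G :: "'h::ab_group_add set"
    and h :: "'g \<Rightarrow> 'h \<Rightarrow> 'a" and g :: "'h \<Rightarrow> 'a"
  assumes "finite A" and A_add: "\<And>a a'. a \<in> A \<Longrightarrow> a' \<in> A \<Longrightarrow> a + a' \<in> A" and "0 \<in> A"
    and "finite G" and G_add: "\<And>x y. x \<in> G \<Longrightarrow> y \<in> G \<Longrightarrow> x + y \<in> G" and "0 \<in> G"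
    and h_add_left: "\<And>a a' x. a \<in> A \<Longrightarrow> a' \<in> A \<Longrightarrow> x \<in> G \<Longrightarrow> h (a + a') x = h a x + h a' x"
    and h_add_right: "\<And>a x y. a \<in> A \<Longrightarrow> x \<in> G \<Longrightarrow> y \<in> G \<Longrightarrow> h a (x + y) = h a x + h a y"
    and h_values: "\<And>a x. a \<in> A \<Longrightarrow> x \<in> G \<Longrightarrow> h a x \<in> Fp p"
    and g_add: "\<And>x y. x \<in> G \<Longrightarrow> y \<in> G \<Longrightarrow> g (x + y) = g x + g y"
    and g_values: "\<And>x. x \<in> G \<Longrightarrow> g x \<in> Fp p"
    and g_kernel: "\<And>x. x \<in> G \<Longrightarrow> \<forall>a\<in>A. h a x = 0 \<Longrightarrow> g x = 0"
  shows "\<exists>a\<in>A. \<forall>x\<in>G. h a x = g x"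
proof (rule ccontr)
  assume no_rep: "\<not> (\<exists>a\<in>A. \<forall>x\<in>G. h a x = g x)"
  let ?T = "\<Sum>a\<in>A. \<Sum>x\<in>G. zpow p (h a x - g x)"
  let ?K = "{x\<in>G. \<forall>a\<in>A. h a x = 0}"
  have T: "?T = 0"
  proof (rule sum.neutral, rule ballI)
    fix a assume "a \<in> A"
    then obtain x0 where x0: "x0 \<in> G" "h a x0 \<noteq> g x0"
      using no_rep by blast
    show "(\<Sum>x\<in>G. zpow p (h a x - g x)) = 0"
      by (rule sum_zpow_character_eq_0[OF \<open>finite G\<close> G_add, of _ x0])
        (use \<open>a \<in> A\<close> x0 h_add_right g_add h_values g_values in auto)
  qed
  have "?T = (\<Sum>x\<in>G. \<Sum>a\<in>A. zpow p (h a x) * zpow p (- g x))"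
    by (subst sum.swap) (intro sum.cong refl, simp add: zpow_diff h_values g_values)
  also have "\<dots> = (\<Sum>x\<in>G. zpow p (- g x) * (\<Sum>a\<in>A. zpow p (h a x)))"
    by (simp add: sum_distrib_left mult.commute)
  also have "\<dots> = (\<Sum>x\<in>G. if x \<in> ?K then of_nat (card A) else 0)"
  proof (rule sum.cong[OF refl])
    fix x assume "x \<in> G"
    have "(\<Sum>a\<in>A. zpow p (h a x)) = (if \<forall>a\<in>A. h a x = 0 then of_nat (card A) else 0)"
      using \<open>x \<in> G\<close> by (intro sum_zpow_character[OF \<open>finite A\<close> A_add]) (simp_all add: h_add_left h_values)
    then show "zpow p (- g x) * (\<Sum>a\<in>A. zpow p (h a x)) = (if x \<in> ?K then of_nat (card A) else 0)"
      using g_kernel[OF \<open>x \<in> G\<close>] \<open>x \<in> G\<close> by auto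
  qed
  also have "\<dots> = of_nat (card ?K) * of_nat (card A)"
    using \<open>finite G\<close> by (simp add: sum.If_cases Int_def)
  finally have "of_nat (card ?K) * of_nat (card A) = (0 :: complex)"
    using T by simp
  moreover have "card A > 0"
    using \<open>finite A\<close> \<open>0 \<in> A\<close> card_gt_0_iff by blast
  moreover have "card ?K > 0"
  proof -
    have "h a 0 = 0" if "a \<in> A" for a
      using h_add_right[OF that \<open>0 \<in> G\<close> \<open>0 \<in> G\<close>] by (metis add_cancel_right_right add_0)
    then have "0 \<in> ?K"
      using \<open>0 \<in> G\<close> by simp
    then show ?thesis
      using \<open>finite G\<close> card_gt_0_iff by fastforce
  qed
  ultimately show False
    by simp
qed

lemma mem_dual_if_tr_orthogonal:
  fixes C :: "(nat \<Rightarrow> 'a) set"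
  assumes "lin_code n C" "v \<in> vecs n" "\<forall>c\<in>C. tr p r (dotp n c v) = 0"
  shows "v \<in> dual n C"
proof -
  obtain u :: 'a where "tr p r u \<noteq> 0"
    using tr_nonzero by blast
  have "dotp n c v = 0" if "c \<in> C" for c
  proof (rule ccontr)
    assume "dotp n c v \<noteq> 0"
    then have "dotp n (vscale (u / dotp n c v) c) v = u"
      by (simp add: dotp_vscale_left)
    moreover have "vscale (u / dotp n c v) c \<in> C"
      using lin_code_vscale[OF assms(1) that] .
    ultimately show False
      using assms(3) \<open>tr p r u \<noteq> 0\<close> by metis
  qed
  then show ?thesis
    using assms(2) by (simp add: dual_def)
qed

lemma mem_code_if_tr_orthogonal_dual:
  fixes C :: "(nat \<Rightarrow> 'a) set"
  assumes C: "lin_code n C" and "y \<in> vecs n" "\<forall>d\<in>dual n C. tr p r (dotp n d y) = 0"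
  shows "y \<in> C"
proof -
  have "\<exists>c\<in>C. \<forall>x\<in>vecs n. tr p r (dotp n c x) = tr p r (dotp n y x)"
  proof (rule character_represented_by_pairing[where h = "\<lambda>c x. tr p r (dotp n c x)"])
    fix x assume "x \<in> vecs n" "\<forall>c\<in>C. tr p r (dotp n c x) = 0"
    then have "x \<in> dual n C"
      by (rule mem_dual_if_tr_orthogonal[OF C])
    then show "tr p r (dotp n y x) = 0"
      using assms(3) by (simp add: dotp_commute)
  qed (simp_all add: finite_lin_code[OF C] finite_vecs lin_code_zero[OF C] lin_code_add[OF C]
      dotp_add_left dotp_add_right tr_add)
  then obtain c where "c \<in> C" "\<forall>x\<in>vecs n. tr p r (dotp n (c - y) x) = 0"
    by (auto simp: dotp_diff_left tr_diff)
  moreover have "c - y = 0"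
    using calculation lin_code_subset_vecs[OF C] \<open>y \<in> vecs n\<close>
    by (intro tr_dotp_nondegenerate[of _ n]) auto
  ultimately show ?thesis
    by simp
qed

lemma Theta_nonempty:
  fixes C :: "(nat \<Rightarrow> 'a) set"
  assumes C: "lin_code n C" and f: "f \<in> lin_maps p C"
  shows "\<exists>x. x \<in> Theta p r n C f"
proof -
  have f_add: "\<And>x y. x \<in> C \<Longrightarrow> y \<in> C \<Longrightarrow> f (x + y) = f x + f y"
    and f_values: "\<And>x. x \<in> C \<Longrightarrow> f x \<in> Fp p"
    using f unfolding lin_maps_def by auto
  have "f 0 = 0"
    using f_add[OF lin_code_zero[OF C] lin_code_zero[OF C]] by (metis add_cancel_right_right add_0)
  have "\<exists>x\<in>vecs n. \<forall>c\<in>C. tr p r (dotp n c x) = f c"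
  proof (rule character_represented_by_pairing[where h = "\<lambda>x c. tr p r (dotp n c x)"])
    fix c assume "c \<in> C" "\<forall>x\<in>vecs n. tr p r (dotp n c x) = 0"
    then have "c = 0"
      using lin_code_subset_vecs[OF C] by (intro tr_dotp_nondegenerate[of c n]) (auto simp: dotp_commute)
    then show "f c = 0"
      using \<open>f 0 = 0\<close> by simp
  qed (simp_all add: finite_lin_code[OF C] finite_vecs lin_code_zero[OF C] lin_code_add[OF C]
      f_add f_values dotp_add_left dotp_add_right tr_add)
  then show ?thesis
    unfolding Theta_def by fastforce
qed

lemma lin_map_nonzero_at:
  fixes C :: "(nat \<Rightarrow> 'a) set"
  assumes C: "lin_code n C" and "c \<in> C" "c \<noteq> 0"
  obtains g where "g \<in> lin_maps p C" "g c \<noteq> 0"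
proof -
  obtain j where "c j \<noteq> 0"
    using \<open>c \<noteq> 0\<close> by (auto simp: fun_eq_iff)
  obtain u :: 'a where "tr p r u \<noteq> 0"
    using tr_nonzero by blast
  define e where "e = u / c j"
  define g where "g = (\<lambda>x. if x \<in> C then tr p r (x j * e) else 0)"
  have "g \<in> lin_maps p C"
    unfolding lin_maps_def
  proof (intro CollectI conjI ballI allI impI)
    fix x y assume "x \<in> C" "y \<in> C"
    then show "g (x + y) = g x + g y"
      using lin_code_add[OF C] by (simp add: g_def algebra_simps tr_add)
  next
    fix a :: 'a and x assume "a \<in> Fp p" "x \<in> C"
    then show "g (vscale a x) = a * g x"
      using lin_code_vscale[OF C] by (simp add: g_def vscale_def mult.assoc tr_mult_Fp)
  qed (simp_all add: g_def)
  moreover have "g c = tr p r u"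
    using \<open>c \<in> C\<close> \<open>c j \<noteq> 0\<close> by (simp add: g_def e_def)
  ultimately show ?thesis
    using that \<open>tr p r u \<noteq> 0\<close> by simp
qed

lemma pauli_apply: "pauli p r N w a (b :: nat \<Rightarrow> 'a) \<psi> y = w * \<epsilon> (dotp N b (y - a)) * \<psi> (y - a)"
  by (simp add: pauli_def \<epsilon>_def)

lemma pauli_comp:
  fixes b :: "nat \<Rightarrow> 'a"
  shows "pauli p r N w a b \<circ> pauli p r N w' a' b' = pauli p r N (w * w' * \<epsilon> (dotp N b a')) (a + a') (b + b')"
proof (intro ext)
  fix \<psi> :: "'a qstate" and y
  have "dotp N b (y - a) = dotp N b a' + dotp N b (y - (a + a'))"
    by (simp add: dotp_diff_right dotp_add_right)
  then show "(pauli p r N w a b \<circ> pauli p r N w' a' b') \<psi> y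
      = pauli p r N (w * w' * \<epsilon> (dotp N b a')) (a + a') (b + b') \<psi> y"
    by (simp add: pauli_apply epsilon_add dotp_add_left diff_diff_eq ac_simps)
qed

lemma pauli_commute_iff:
  assumes "w \<noteq> 0" "w' \<noteq> 0"
  shows "pauli p r N w a (b :: nat \<Rightarrow> 'a) \<circ> pauli p r N w' a' b' = pauli p r N w' a' b' \<circ> pauli p r N w a b
     \<longleftrightarrow> tr p r (dotp N b a') = tr p r (dotp N b' a)"
proof
  assume "pauli p r N w a b \<circ> pauli p r N w' a' b' = pauli p r N w' a' b' \<circ> pauli p r N w a b"
  from fun_cong[OF fun_cong[OF this, of "\<lambda>_. 1"], of "a + a'"]
  have "w * w' * \<epsilon> (dotp N b a') = w' * w * \<epsilon> (dotp N b' a)"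
    by (simp add: pauli_comp pauli_apply add.commute)
  then show "tr p r (dotp N b a') = tr p r (dotp N b' a)"
    using assms by (simp add: mult.commute epsilon_eq_iff)
qed (simp add: pauli_comp epsilon_eq_iff[symmetric] ac_simps)

lemma pauli_inj:
  fixes b :: "nat \<Rightarrow> 'a"
  assumes "w \<noteq> 0" "a \<in> vecs N" "a' \<in> vecs N" "b \<in> vecs N" "b' \<in> vecs N"
    and eq: "pauli p r N w a b = pauli p r N w' a' b'"
  shows "w = w' \<and> a = a' \<and> b = b'"
proof -
  let ?\<delta> = "\<lambda>x :: nat \<Rightarrow> 'a. if x = 0 then (1 :: complex) else 0"
  have "pauli p r N w a b ?\<delta> a = w"
    by (simp add: pauli_apply)
  then have "pauli p r N w' a' b' ?\<delta> a = w"
    by (simp only: eq)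
  then have "a = a'"
    using assms(1) by (auto simp: pauli_apply split: if_splits)
  moreover have "w = w'"
    using fun_cong[OF fun_cong[OF eq, of "\<lambda>_. 1"], of a] \<open>a = a'\<close> by (simp add: pauli_apply)
  moreover have "tr p r (dotp N (b - b') x) = 0" for x
  proof -
    have "\<epsilon> (dotp N b x) = \<epsilon> (dotp N b' x)"
      using fun_cong[OF fun_cong[OF eq, of "\<lambda>_. 1"], of "x + a"] \<open>a = a'\<close> \<open>w = w'\<close> assms(1)
      by (simp add: pauli_apply)
    then show ?thesis
      by (simp add: epsilon_eq_iff dotp_diff_left tr_diff)
  qed
  then have "b - b' = 0"
    using assms(4,5) by (intro tr_dotp_nondegenerate[of _ N]) simp_all
  ultimately show ?thesis
    by simp
qed

lemma phases_nonzero: "w \<in> phases p \<Longrightarrow> w \<noteq> 0"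
  unfolding phases_def zeta_def by (auto split: if_splits)

lemma pauli_mem_pauli_set_iff:
  assumes "w \<in> phases p" "U \<in> vecs N" "V \<in> vecs N" "A \<subseteq> vecs N" "B \<subseteq> vecs N"
  shows "pauli p r N w U (V :: nat \<Rightarrow> 'a) \<in> {pauli p r N w' X Y | w' X Y. w' \<in> phases p \<and> X \<in> A \<and> Y \<in> B}
    \<longleftrightarrow> U \<in> A \<and> V \<in> B"
proof
  assume "pauli p r N w U V \<in> {pauli p r N w' X Y | w' X Y. w' \<in> phases p \<and> X \<in> A \<and> Y \<in> B}"
  then obtain w' X Y where "pauli p r N w U V = pauli p r N w' X Y" "X \<in> A" "Y \<in> B"
    by blast
  then show "U \<in> A \<and> V \<in> B"
    using pauli_inj[OF phases_nonzero[OF assms(1)] assms(2) _ assms(3)] assms(4,5) by blast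
qed (use assms(1) in blast)

lemma one_in_phases: "1 \<in> phases p"
  unfolding phases_def using p_gt_1 by (auto intro: exI[of _ 0])

lemma finite_PG: "finite (PG p r N :: ('a qstate \<Rightarrow> 'a qstate) set)"
proof -
  have "finite (phases p)"
    unfolding phases_def by auto
  moreover have "(PG p r N :: ('a qstate \<Rightarrow> 'a qstate) set)
      \<subseteq> (\<lambda>(w, a, b). pauli p r N w a b) ` (phases p \<times> vecs N \<times> vecs N)"
  proof
    fix E :: "'a qstate \<Rightarrow> 'a qstate"
    assume "E \<in> PG p r N"
    then obtain w a b where "E = pauli p r N w a b" "w \<in> phases p" "a \<in> vecs N" "b \<in> vecs N"
      unfolding PG_def by blast
    then show "E \<in> (\<lambda>(w, a, b). pauli p r N w a b) ` (phases p \<times> vecs N \<times> vecs N)"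
      by (intro image_eqI[of _ _ "(w, a, b)"]) auto
  qed
  ultimately show ?thesis
    using finite_vecs by (meson finite_SigmaI finite_imageI finite_subset)
qed

lemma pweight_pauli:
  assumes "w \<in> phases p" "a \<in> vecs N" "b \<in> vecs N"
  shows "pweight p r N (pauli p r N w a (b :: nat \<Rightarrow> 'a)) = card {j. j < N \<and> (a j \<noteq> 0 \<or> b j \<noteq> 0)}"
  unfolding pweight_def
proof (rule Least_equality)
  fix t assume "\<exists>w' a' b'. w' \<in> phases p \<and> a' \<in> vecs N \<and> b' \<in> vecs N
      \<and> pauli p r N w a b = pauli p r N w' a' b' \<and> t = card {j. j < N \<and> (a' j \<noteq> 0 \<or> b' j \<noteq> 0)}"
  then obtain w' a' b' where "a' \<in> vecs N" "b' \<in> vecs N" "pauli p r N w a b = pauli p r N w' a' b'"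
      "t = card {j. j < N \<and> (a' j \<noteq> 0 \<or> b' j \<noteq> 0)}"
    by blast
  then show "card {j. j < N \<and> (a j \<noteq> 0 \<or> b j \<noteq> 0)} \<le> t"
    using pauli_inj[OF phases_nonzero[OF assms(1)] assms(2) _ assms(3)] by simp
qed (use assms in blast)

lemma center_PG: "center (PG p r N :: ('a qstate \<Rightarrow> 'a qstate) set) = {pauli p r N w 0 0 | w. w \<in> phases p}"
proof (intro equalityI subsetI)
  fix E :: "'a qstate \<Rightarrow> 'a qstate"
  assume E: "E \<in> center (PG p r N)"
  then obtain w a b where Ed: "E = pauli p r N w a b" "w \<in> phases p" "a \<in> vecs N" "b \<in> vecs N"
    unfolding center_def centralizer_def PG_def by blast
  have commutes: "tr p r (dotp N b a') = tr p r (dotp N b' a)" if "a' \<in> vecs N" "b' \<in> vecs N" for a' b'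
  proof -
    have "pauli p r N 1 a' b' \<in> PG p r N"
      using that one_in_phases unfolding PG_def by blast
    then have "E \<circ> pauli p r N 1 a' b' = pauli p r N 1 a' b' \<circ> E"
      using E unfolding center_def centralizer_def by blast
    then show ?thesis
      using pauli_commute_iff[OF phases_nonzero[OF Ed(2)], of 1 N a b a' b'] Ed(1) by simp
  qed
  have "a = 0"
    using commutes[of 0] by (intro tr_dotp_nondegenerate[OF Ed(3)]) (auto simp: dotp_commute)
  moreover have "b = 0"
    using commutes[of _ 0] by (intro tr_dotp_nondegenerate[OF Ed(4)]) auto
  ultimately show "E \<in> {pauli p r N w 0 0 | w. w \<in> phases p}"
    using Ed by blast
next
  fix E :: "'a qstate \<Rightarrow> 'a qstate"
  assume "E \<in> {pauli p r N w 0 0 | w. w \<in> phases p}"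
  then obtain w where Ed: "E = pauli p r N w 0 0" "w \<in> phases p"
    by blast
  have "E \<circ> F = F \<circ> E" if F: "F \<in> PG p r N" for F :: "'a qstate \<Rightarrow> 'a qstate"
  proof -
    obtain w' a b where "F = pauli p r N w' a b" "w' \<in> phases p"
      using F unfolding PG_def by blast
    then show ?thesis
      using pauli_commute_iff[of w w' N 0 0 a b] phases_nonzero Ed by simp
  qed
  moreover have "E \<in> PG p r N"
    using Ed unfolding PG_def by force
  ultimately show "E \<in> center (PG p r N)"
    unfolding center_def centralizer_def by blast
qed

lemma pauli_fixes_span:
  assumes "\<And>\<psi>. \<psi> \<in> S \<Longrightarrow> pauli p r N w a b \<psi> = \<psi>" and "v \<in> module.span cscale S"
  shows "pauli p r N w a (b :: nat \<Rightarrow> 'a) v = v"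
proof -
  have "module.subspace cscale {v. pauli p r N w a b v = v}"
    unfolding module.subspace_def[OF module_cscale]
    by (auto simp: pauli_def cscale_def fun_eq_iff algebra_simps)
  then show ?thesis
    using module.span_induct[OF module_cscale assms(2)] assms(1) by blast
qed

lemma blocks_in_dual_if_tr_orthogonal:
  fixes C :: "(nat \<Rightarrow> 'a) set"
  assumes C: "lin_code n C" and "b \<in> vecs (n * m)"
    and orth: "\<forall>X\<in>blocks_in n m C. tr p r (dotp (n * m) b X) = 0"
  shows "b \<in> blocks_in n m (dual n C)"
  unfolding blocks_in_def
proof (intro CollectI conjI allI impI)
  fix i assume "i < m"
  show "block n i b \<in> dual n C"
  proof (rule mem_dual_if_tr_orthogonal[OF C block_in_vecs], intro ballI)
    fix c assume "c \<in> C"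
    then have "c \<in> vecs n"
      using lin_code_subset_vecs[OF C] by blast
    have "embed_block n i c \<in> blocks_in n m C"
      using \<open>i < m\<close> \<open>c \<in> C\<close> \<open>c \<in> vecs n\<close> lin_code_zero[OF C]
      by (auto simp: blocks_in_def embed_block_in_vecs block_embed_block)
    then have "tr p r (dotp (n * m) b (embed_block n i c)) = 0"
      using orth by blast
    then show "tr p r (dotp n c (block n i b)) = 0"
      using dotp_embed_block[OF \<open>i < m\<close> \<open>c \<in> vecs n\<close>] by (simp add: dotp_commute[of n c])
  qed
qed (use assms in simp)

lemma blocks_in_code_if_tr_orthogonal_dual:
  fixes C :: "(nat \<Rightarrow> 'a) set"
  assumes C: "lin_code n C" and "a \<in> vecs (n * m)"
    and orth: "\<forall>Y\<in>blocks_in n m (dual n C). tr p r (dotp (n * m) Y a) = 0"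
  shows "a \<in> blocks_in n m C"
  unfolding blocks_in_def
proof (intro CollectI conjI allI impI)
  fix i assume "i < m"
  show "block n i a \<in> C"
  proof (rule mem_code_if_tr_orthogonal_dual[OF C block_in_vecs], intro ballI)
    fix d assume "d \<in> dual n C"
    then have "d \<in> vecs n"
      by (simp add: dual_def)
    have "embed_block n i d \<in> blocks_in n m (dual n C)"
      using \<open>i < m\<close> \<open>d \<in> dual n C\<close> \<open>d \<in> vecs n\<close>
      by (auto simp: blocks_in_def embed_block_in_vecs block_embed_block dual_def)
    then have "tr p r (dotp (n * m) (embed_block n i d) a) = 0"
      using orth by blast
    then show "tr p r (dotp n d (block n i a)) = 0"
      using dotp_embed_block[OF \<open>i < m\<close> \<open>d \<in> vecs n\<close>, of a]
      by (simp add: dotp_commute[of "n * m" "embed_block n i d"] dotp_commute[of n d])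
  qed
qed (use assms in simp)

end

section \<open>The construction\<close>

locale quantum_code_construction = prime_power_field p r \<epsilon>
  for p r :: nat and \<epsilon> :: "'a::{field,finite} \<Rightarrow> complex" +
  fixes n m k s :: nat and C :: "(nat \<Rightarrow> 'a) set"
    and D :: "(nat \<Rightarrow> 'b::{field,finite}) set" and \<kappa> :: "'b \<Rightarrow> (nat \<Rightarrow> 'a) \<Rightarrow> 'a"
  assumes card_ext_field: "CARD('b) = CARD('a) ^ k"
    and lin_C: "lin_code n C" and dim_C: "code_dim C = k" and k_pos: "1 \<le> k"
    and lin_D: "lin_code m D" and dim_D: "code_dim D = s" and m_pos: "0 < m"
    and D_hits_1: "\<forall>i<m. \<exists>d\<in>D. d i = 1"
    and \<kappa>_add: "\<forall>u v. \<kappa> (u + v) = \<kappa> u + \<kappa> v"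
    and \<kappa>_bij: "bij_betw \<kappa> UNIV (lin_maps p C)"
begin

abbreviation "N \<equiv> n * m"
abbreviation "C_m \<equiv> blocks_in n m C"
abbreviation "Cperp_m \<equiv> blocks_in n m (dual n C)"
abbreviation "F \<equiv> FLam n m \<kappa>"
abbreviation "\<Phi> \<equiv> Phi p n m C \<kappa>"
abbreviation "span_Phi \<equiv> module.span cscale {\<Phi> \<Lambda> | \<Lambda>. \<Lambda> \<in> D}"
abbreviation "DT \<equiv> DTheta p r n m C \<kappa> D"

definition ker_F :: "(nat \<Rightarrow> 'a) set" where
  "ker_F = {X \<in> C_m. \<forall>\<Lambda>\<in>D. F \<Lambda> X = 0}"

lemma finite_D: "finite D"
  using finite_lin_code[OF lin_D] .

lemma zero_in_D: "0 \<in> D"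
  using lin_code_zero[OF lin_D] .

lemma C_m_subset_vecs: "X \<in> C_m \<Longrightarrow> X \<in> vecs N"
  by (simp add: blocks_in_def)

lemma zero_in_C_m: "0 \<in> C_m"
  by (simp add: blocks_in_def lin_code_zero[OF lin_C])

lemma C_m_add: "X \<in> C_m \<Longrightarrow> Y \<in> C_m \<Longrightarrow> X + Y \<in> C_m"
  by (simp add: blocks_in_def block_add lin_code_add[OF lin_C])

lemma C_m_diff: "X \<in> C_m \<Longrightarrow> Y \<in> C_m \<Longrightarrow> X - Y \<in> C_m"
  by (simp add: blocks_in_def block_diff lin_code_diff[OF lin_C])

lemma finite_C_m: "finite C_m"
  using finite_vecs[of N] by (rule finite_subset[rotated]) (auto simp: blocks_in_def)

lemma embed_block_in_C_m: "i < m \<Longrightarrow> c \<in> C \<Longrightarrow> embed_block n i c \<in> C_m"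
  using lin_code_subset_vecs[OF lin_C] lin_code_zero[OF lin_C]
  by (auto simp: blocks_in_def embed_block_in_vecs block_embed_block)

lemma Cperp_m_subset_vecs: "Y \<in> Cperp_m \<Longrightarrow> Y \<in> vecs N"
  by (simp add: blocks_in_def)

lemma zero_in_Cperp_m: "0 \<in> Cperp_m"
  by (simp add: blocks_in_def dual_def)

lemma dotp_Cperp_m_C_m: "Y \<in> Cperp_m \<Longrightarrow> X \<in> C_m \<Longrightarrow> dotp N Y X = 0"
  unfolding dotp_blocks by (intro sum.neutral) (auto simp: blocks_in_def dual_def dotp_commute)

lemma \<kappa>_in_lin_maps: "\<kappa> u \<in> lin_maps p C"
  using bij_betw_apply[OF \<kappa>_bij] by simp

lemma \<kappa>_add_code: "x \<in> C \<Longrightarrow> y \<in> C \<Longrightarrow> \<kappa> u (x + y) = \<kappa> u x + \<kappa> u y"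
  using \<kappa>_in_lin_maps[of u] unfolding lin_maps_def by blast

lemma \<kappa>_in_Fp: "x \<in> C \<Longrightarrow> \<kappa> u x \<in> Fp p"
  using \<kappa>_in_lin_maps[of u] unfolding lin_maps_def by blast

lemma \<kappa>_outside_code: "x \<notin> C \<Longrightarrow> \<kappa> u x = 0"
  using \<kappa>_in_lin_maps[of u] unfolding lin_maps_def by blast

lemma \<kappa>_apply_zero [simp]: "\<kappa> u 0 = 0"
  using \<kappa>_add_code[OF lin_code_zero[OF lin_C] lin_code_zero[OF lin_C]]
  by (metis add_cancel_right_right add_0)

lemma \<kappa>_zero: "\<kappa> 0 = 0"
  using \<kappa>_add by (metis add_cancel_right_right add_0)

lemma \<kappa>_inj: "\<kappa> u = \<kappa> v \<Longrightarrow> u = v"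
  using bij_betw_imp_inj_on[OF \<kappa>_bij] by (simp add: inj_on_def)

lemma \<kappa>_surj: "f \<in> lin_maps p C \<Longrightarrow> \<exists>u. \<kappa> u = f"
  using bij_betw_imp_surj_on[OF \<kappa>_bij] by (metis imageE)

lemma ker_F_subset_C_m: "X \<in> ker_F \<Longrightarrow> X \<in> C_m"
  by (simp add: ker_F_def)

lemma F_zero [simp]: "F \<Lambda> 0 = 0"
  by (simp add: FLam_def)

lemma zero_in_ker_F: "0 \<in> ker_F"
  by (simp add: ker_F_def zero_in_C_m FLam_def)

lemma F_in_Fp: "X \<in> C_m \<Longrightarrow> F \<Lambda> X \<in> Fp p"
  unfolding FLam_def by (intro Fp_sum \<kappa>_in_Fp) (auto simp: blocks_in_def)

lemma F_add: "X \<in> C_m \<Longrightarrow> Y \<in> C_m \<Longrightarrow> F \<Lambda> (X + Y) = F \<Lambda> X + F \<Lambda> Y"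
  unfolding FLam_def by (auto simp: block_add \<kappa>_add_code blocks_in_def sum.distrib intro!: sum.cong)

lemma F_diff: "X \<in> C_m \<Longrightarrow> Y \<in> C_m \<Longrightarrow> F \<Lambda> (X - Y) = F \<Lambda> X - F \<Lambda> Y"
  using F_add[of "X - Y" Y \<Lambda>] C_m_diff by simp

lemma F_add_functional: "F (\<Lambda> + \<Lambda>') X = F \<Lambda> X + F \<Lambda>' X"
  unfolding FLam_def by (simp add: \<kappa>_add sum.distrib)

lemma F_zero_functional: "F 0 X = 0"
  unfolding FLam_def by (simp add: \<kappa>_zero)

lemma F_embed_block:
  assumes "i < m" "c \<in> C"
  shows "F \<Lambda> (embed_block n i c) = \<kappa> (\<Lambda> i) c"
proof -
  have "F \<Lambda> (embed_block n i c) = (\<Sum>i'<m. if i' = i then \<kappa> (\<Lambda> i') c else 0)"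
    unfolding FLam_def using lin_code_subset_vecs[OF lin_C] assms(2)
    by (intro sum.cong) (auto simp: block_embed_block \<kappa>_outside_code lin_code_zero[OF lin_C])
  then show ?thesis
    using assms(1) by simp
qed

lemma F_separates:
  assumes "\<Lambda> \<in> D" "\<Lambda>' \<in> D" "\<Lambda> \<noteq> \<Lambda>'"
  obtains X where "X \<in> C_m" "F \<Lambda> X \<noteq> F \<Lambda>' X"
proof -
  obtain i where i: "\<Lambda> i \<noteq> \<Lambda>' i"
    using assms(3) by (auto simp: fun_eq_iff)
  have "i < m"
  proof (rule ccontr)
    assume "\<not> i < m"
    then have "\<Lambda> i = 0" "\<Lambda>' i = 0"
      using assms(1,2) lin_code_subset_vecs[OF lin_D] by (auto simp: vecs_def)
    then show False
      using i by simp
  qed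
  obtain c where c: "\<kappa> (\<Lambda> i) c \<noteq> \<kappa> (\<Lambda>' i) c"
    using i \<kappa>_inj by (auto simp: fun_eq_iff)
  then have "c \<in> C"
    using \<kappa>_outside_code by force
  then show ?thesis
    using that[OF embed_block_in_C_m[OF \<open>i < m\<close>]] F_embed_block[OF \<open>i < m\<close>] c by metis
qed

lemma sum_zpow_F:
  assumes "X \<in> C_m"
  shows "(\<Sum>\<Lambda>\<in>D. zpow p (F \<Lambda> X)) = (if X \<in> ker_F then of_nat (card D) else 0)"
  using sum_zpow_character[OF finite_D lin_code_add[OF lin_D], of "\<lambda>\<Lambda>. F \<Lambda> X"] assms
  by (simp add: F_add_functional F_in_Fp ker_F_def)

lemma DTheta_subset_vecs: "V \<in> DT \<Longrightarrow> V \<in> vecs N"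
  unfolding DTheta_def by blast

lemma zero_in_DTheta: "0 \<in> DT"
  unfolding DTheta_def Theta_def using zero_in_D by (intro UN_I[of 0]) (auto simp: \<kappa>_zero)

lemma tr_dotp_DTheta_ker_F:
  assumes V: "V \<in> DT" and X: "X \<in> ker_F"
  shows "tr p r (dotp N V X) = 0"
proof -
  obtain \<Lambda> where "\<Lambda> \<in> D" and blocks: "\<forall>i<m. block n i V \<in> Theta p r n C (\<kappa> (\<Lambda> i))"
    using V unfolding DTheta_def by blast
  have "X \<in> C_m"
    using X by (simp add: ker_F_def)
  have "tr p r (dotp N V X) = (\<Sum>i<m. tr p r (dotp n (block n i V) (block n i X)))"
    by (simp add: dotp_blocks tr_sum)
  also have "\<dots> = (\<Sum>i<m. \<kappa> (\<Lambda> i) (block n i X))"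
    using blocks \<open>X \<in> C_m\<close> by (intro sum.cong) (auto simp: Theta_def blocks_in_def dotp_commute)
  also have "\<dots> = 0"
    using X \<open>\<Lambda> \<in> D\<close> by (simp add: ker_F_def FLam_def)
  finally show ?thesis .
qed

lemma mem_DTheta_if_tr_orthogonal_ker_F:
  assumes "b \<in> vecs N" and orth: "\<forall>X\<in>ker_F. tr p r (dotp N b X) = 0"
  shows "b \<in> DT"
proof -
  have "\<exists>\<Lambda>\<in>D. \<forall>X\<in>C_m. F \<Lambda> X = tr p r (dotp N b X)"
  proof (rule character_represented_by_pairing[where h = F])
    fix X assume "X \<in> C_m" "\<forall>\<Lambda>\<in>D. F \<Lambda> X = 0"
    then show "tr p r (dotp N b X) = 0"
      using orth by (simp add: ker_F_def)
  qed (simp_all add: finite_D lin_code_zero[OF lin_D] lin_code_add[OF lin_D] finite_C_m zero_in_C_m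
      C_m_add F_add F_add_functional F_in_Fp dotp_add_right tr_add)
  then obtain \<Lambda> where "\<Lambda> \<in> D" and \<Lambda>: "\<forall>X\<in>C_m. F \<Lambda> X = tr p r (dotp N b X)"
    by blast
  have "block n i b \<in> Theta p r n C (\<kappa> (\<Lambda> i))" if "i < m" for i
  proof -
    have "\<kappa> (\<Lambda> i) c = tr p r (dotp n c (block n i b))" if "c \<in> C" for c
    proof -
      have "c \<in> vecs n"
        using that lin_code_subset_vecs[OF lin_C] by blast
      have "\<kappa> (\<Lambda> i) c = F \<Lambda> (embed_block n i c)"
        using F_embed_block[OF \<open>i < m\<close> that] by simp
      also have "\<dots> = tr p r (dotp N b (embed_block n i c))"
        using \<Lambda> embed_block_in_C_m[OF \<open>i < m\<close> that] by blast
      also have "\<dots> = tr p r (dotp n (block n i b) c)"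
        using dotp_embed_block[OF \<open>i < m\<close> \<open>c \<in> vecs n\<close>] by simp
      finally show ?thesis
        by (simp add: dotp_commute[of n "block n i b"])
    qed
    then show ?thesis
      by (simp add: Theta_def)
  qed
  then show ?thesis
    unfolding DTheta_def using \<open>\<Lambda> \<in> D\<close> \<open>b \<in> vecs N\<close> by blast
qed

definition amplitude :: complex where
  "amplitude = complex_of_real (1 / sqrt (real (CARD('a) ^ k))) ^ m"

lemma amplitude_nonzero: "amplitude \<noteq> 0"
  by (simp add: amplitude_def)

lemma Phi_apply: "\<Phi> \<Lambda> X = (if X \<in> C_m then amplitude * zpow p (F \<Lambda> X) else 0)"
proof (cases "X \<in> C_m")
  case True
  then have blocks: "\<And>i. i < m \<Longrightarrow> block n i X \<in> C"
    by (simp add: blocks_in_def)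
  define c where "c = complex_of_real (1 / sqrt (real (CARD('a) ^ k)))"
  have "\<Phi> \<Lambda> X = (\<Prod>i<m. c * zpow p (\<kappa> (\<Lambda> i) (block n i X)))"
    unfolding Phi_def phi_def dim_C c_def[symmetric] using True C_m_subset_vecs
    by (auto simp: blocks intro!: prod.cong)
  also have "\<dots> = c ^ m * (\<Prod>i<m. zpow p (\<kappa> (\<Lambda> i) (block n i X)))"
    by (simp add: prod.distrib)
  also have "(\<Prod>i<m. zpow p (\<kappa> (\<Lambda> i) (block n i X))) = zpow p (F \<Lambda> X)"
    unfolding FLam_def by (rule zpow_sum[symmetric]) (auto simp: blocks \<kappa>_in_Fp)
  finally show ?thesis
    using True by (simp add: amplitude_def c_def)
next
  case False
  then show ?thesis
    unfolding Phi_def phi_def blocks_in_def by (auto intro: prod_zero)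
qed

lemma Phi_in_span_Phi: "\<Lambda> \<in> D \<Longrightarrow> \<Phi> \<Lambda> \<in> span_Phi"
  by (rule module.span_base[OF module_cscale]) blast

lemma pauli_fixes_Phi:
  assumes "X \<in> ker_F" "Y \<in> Cperp_m" "\<Lambda> \<in> D"
  shows "pauli p r N 1 X Y (\<Phi> \<Lambda>) = \<Phi> \<Lambda>"
proof
  fix y
  have "X \<in> C_m" "F \<Lambda> X = 0"
    using assms by (auto simp: ker_F_def)
  moreover have "y - X \<in> C_m \<longleftrightarrow> y \<in> C_m"
    using C_m_add C_m_diff \<open>X \<in> C_m\<close> by (metis diff_add_cancel)
  ultimately show "pauli p r N 1 X Y (\<Phi> \<Lambda>) y = \<Phi> \<Lambda> y"
    using dotp_Cperp_m_C_m[OF \<open>Y \<in> Cperp_m\<close>] by (simp add: pauli_apply Phi_apply F_diff)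
qed

lemma pauli_in_Stab:
  assumes "X \<in> ker_F" "Y \<in> Cperp_m"
  shows "pauli p r N 1 X Y \<in> Stab p r N span_Phi"
proof -
  have "pauli p r N 1 X Y \<in> PG p r N"
    using assms one_in_phases ker_F_subset_C_m C_m_subset_vecs Cperp_m_subset_vecs
    unfolding PG_def by blast
  moreover have "pauli p r N 1 X Y v = v" if "v \<in> span_Phi" for v
    using pauli_fixes_span[OF _ that] pauli_fixes_Phi[OF assms] by blast
  ultimately show ?thesis
    unfolding Stab_def by blast
qed

text \<open>Testing a stabilizer \<open>w X(a) Z(b)\<close> on \<open>\<Phi>_0\<close> at \<open>a\<close> and at \<open>a + C^m\<close> forces \<open>w = 1\<close>,
  \<open>a \<in> C^m\<close> and \<open>b \<in> (C^\<bottom>)^m\<close>; testing it on \<open>\<Phi>_\<Lambda>\<close> at \<open>a\<close> forces \<open>F_\<Lambda>(a) = 0\<close>.\<close>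

lemma Stab_elementE:
  assumes "E \<in> Stab p r N span_Phi"
  obtains X Y where "E = pauli p r N 1 X Y" "X \<in> ker_F" "Y \<in> Cperp_m"
proof -
  obtain w a b where E: "E = pauli p r N w a b" "w \<in> phases p" "a \<in> vecs N" "b \<in> vecs N"
    using assms unfolding Stab_def PG_def by blast
  have fixes_Phi: "pauli p r N w a b (\<Phi> \<Lambda>) y = \<Phi> \<Lambda> y" if "\<Lambda> \<in> D" for \<Lambda> y
    using assms Phi_in_span_Phi[OF that] E(1) unfolding Stab_def by auto
  from fixes_Phi[OF zero_in_D, of a]
  have "w * amplitude = (if a \<in> C_m then amplitude else 0)"
    using zero_in_C_m by (simp add: pauli_apply Phi_apply F_zero_functional)
  then have "a \<in> C_m" "w = 1"
    using amplitude_nonzero phases_nonzero[OF E(2)] by (auto split: if_splits)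
  have "tr p r (dotp N b x) = 0" if "x \<in> C_m" for x
  proof -
    have "\<epsilon> (dotp N b x) * amplitude = amplitude"
      using fixes_Phi[OF zero_in_D, of "x + a"] that C_m_add[OF that \<open>a \<in> C_m\<close>] \<open>w = 1\<close>
      by (simp add: pauli_apply Phi_apply F_zero_functional)
    then show ?thesis
      using amplitude_nonzero by (simp add: epsilon_eq_1_iff)
  qed
  then have "b \<in> Cperp_m"
    by (intro blocks_in_dual_if_tr_orthogonal[OF lin_C E(4)]) simp
  have "F \<Lambda> a = 0" if "\<Lambda> \<in> D" for \<Lambda>
  proof -
    have "amplitude = amplitude * zpow p (F \<Lambda> a)"
      using fixes_Phi[OF that, of a] \<open>a \<in> C_m\<close> zero_in_C_m \<open>w = 1\<close> by (simp add: pauli_apply Phi_apply)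
    then show ?thesis
      using amplitude_nonzero zpow_eq_1_iff[OF F_in_Fp[OF \<open>a \<in> C_m\<close>]] by simp
  qed
  then have "a \<in> ker_F"
    using \<open>a \<in> C_m\<close> by (simp add: ker_F_def)
  then show ?thesis
    using that E(1) \<open>w = 1\<close> \<open>b \<in> Cperp_m\<close> by blast
qed

lemma Stab_span_Phi: "Stab p r N span_Phi = {pauli p r N 1 X Y | X Y. X \<in> ker_F \<and> Y \<in> Cperp_m}"
proof (intro equalityI subsetI)
  fix E assume "E \<in> Stab p r N span_Phi"
  then show "E \<in> {pauli p r N 1 X Y | X Y. X \<in> ker_F \<and> Y \<in> Cperp_m}"
    by (rule Stab_elementE) blast
qed (use pauli_in_Stab in blast)

text \<open>Under the trace form, \<open>C^m\<close> is the orthogonal of \<open>(C^\<bottom>)^m\<close>, so some \<open>Z(Y)\<close> detects every \<open>y \<notin> C^m\<close>.\<close>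

lemma vanishes_outside_C_m:
  assumes "v \<in> Hsp N" and fixed: "\<And>Y. Y \<in> Cperp_m \<Longrightarrow> pauli p r N 1 0 Y v = v" and "y \<notin> C_m"
  shows "v y = 0"
proof (cases "y \<in> vecs N")
  case True
  then obtain Y where "Y \<in> Cperp_m" "tr p r (dotp N Y y) \<noteq> 0"
    using blocks_in_code_if_tr_orthogonal_dual[OF lin_C True] \<open>y \<notin> C_m\<close> by blast
  moreover have "\<epsilon> (dotp N Y y) * v y = v y"
    using fun_cong[OF fixed[OF \<open>Y \<in> Cperp_m\<close>], of y] by (simp add: pauli_apply)
  ultimately show ?thesis
    by (simp add: epsilon_eq_1_iff)
qed (use assms(1) in \<open>simp add: Hsp_def\<close>)

lemma Fourier_coefficient_times_Phi:
  assumes "y \<in> C_m"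
  shows "(\<Sum>x\<in>C_m. zpow p (- F \<Lambda> x) * v x) * \<Phi> \<Lambda> y
    = (\<Sum>x\<in>C_m. amplitude * v x * zpow p (F \<Lambda> (y - x)))"
proof -
  have "(\<Sum>x\<in>C_m. zpow p (- F \<Lambda> x) * v x) * \<Phi> \<Lambda> y
      = (\<Sum>x\<in>C_m. zpow p (- F \<Lambda> x) * v x * (amplitude * zpow p (F \<Lambda> y)))"
    using assms by (simp add: Phi_apply sum_distrib_right)
  also have "\<dots> = (\<Sum>x\<in>C_m. amplitude * v x * zpow p (F \<Lambda> (y - x)))"
  proof (rule sum.cong[OF refl])
    fix x assume "x \<in> C_m"
    have "zpow p (F \<Lambda> (y - x)) = zpow p (F \<Lambda> y) * zpow p (- F \<Lambda> x)"
      unfolding F_diff[OF assms \<open>x \<in> C_m\<close>] by (rule zpow_diff[OF F_in_Fp[OF assms] F_in_Fp[OF \<open>x \<in> C_m\<close>]])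
    then show "zpow p (- F \<Lambda> x) * v x * (amplitude * zpow p (F \<Lambda> y))
        = amplitude * v x * zpow p (F \<Lambda> (y - x))"
      by simp
  qed
  finally show ?thesis .
qed

lemma card_ker_F_translate: "y \<in> C_m \<Longrightarrow> card {x \<in> C_m. y - x \<in> ker_F} = card ker_F"
  using ker_F_subset_C_m C_m_diff
  by (intro bij_betw_same_card[of "\<lambda>x. y - x"] bij_betw_byWitness[of _ "\<lambda>x. y - x"]) auto

text \<open>Fourier inversion on \<open>C^m\<close>: a function supported on \<open>C^m\<close> and invariant under translation by the
  common kernel of the \<open>F_\<Lambda>\<close> is recovered from its coefficients against the characters \<open>\<zeta>^F_\<Lambda>\<close>.\<close>

lemma sum_Fourier_coefficients_Phi:
  assumes supp: "\<And>y. y \<notin> C_m \<Longrightarrow> v y = 0" and inv: "\<And>X y. X \<in> ker_F \<Longrightarrow> v (y - X) = v y"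
  shows "(\<Sum>\<Lambda>\<in>D. (\<Sum>x\<in>C_m. zpow p (- F \<Lambda> x) * v x) * \<Phi> \<Lambda> y)
    = amplitude * of_nat (card D) * of_nat (card ker_F) * v y"
proof (cases "y \<in> C_m")
  case True
  have "(\<Sum>\<Lambda>\<in>D. (\<Sum>x\<in>C_m. zpow p (- F \<Lambda> x) * v x) * \<Phi> \<Lambda> y)
      = (\<Sum>x\<in>C_m. amplitude * v x * (\<Sum>\<Lambda>\<in>D. zpow p (F \<Lambda> (y - x))))"
    unfolding Fourier_coefficient_times_Phi[OF True] by (subst sum.swap) (simp add: sum_distrib_left)
  also have "\<dots> = (\<Sum>x\<in>C_m. if y - x \<in> ker_F then amplitude * of_nat (card D) * v y else 0)"
  proof (rule sum.cong[OF refl])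
    fix x assume "x \<in> C_m"
    have "v x = v y" if "y - x \<in> ker_F"
      using inv[OF that, of y] by simp
    then show "amplitude * v x * (\<Sum>\<Lambda>\<in>D. zpow p (F \<Lambda> (y - x)))
        = (if y - x \<in> ker_F then amplitude * of_nat (card D) * v y else 0)"
      unfolding sum_zpow_F[OF C_m_diff[OF True \<open>x \<in> C_m\<close>]] by simp
  qed
  also have "\<dots> = of_nat (card {x \<in> C_m. y - x \<in> ker_F}) * (amplitude * of_nat (card D) * v y)"
    using finite_C_m by (simp add: sum.If_cases Int_def)
  finally show ?thesis
    by (simp add: card_ker_F_translate[OF True] mult_ac)
qed (simp add: supp Phi_apply)

lemma mem_span_Phi_if_fixed:
  assumes "v \<in> Hsp N" and fixed: "\<And>X Y. X \<in> ker_F \<Longrightarrow> Y \<in> Cperp_m \<Longrightarrow> pauli p r N 1 X Y v = v"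
  shows "v \<in> span_Phi"
proof -
  have supp: "v y = 0" if "y \<notin> C_m" for y
    using vanishes_outside_C_m[OF assms(1) fixed[OF zero_in_ker_F] that] .
  have inv: "v (y - X) = v y" if "X \<in> ker_F" for X y
    using fun_cong[OF fixed[OF that zero_in_Cperp_m], of y] by (simp add: pauli_apply)
  define \<alpha> where "\<alpha> \<Lambda> = (\<Sum>x\<in>C_m. zpow p (- F \<Lambda> x) * v x)" for \<Lambda>
  define c where "c = amplitude * of_nat (card D) * of_nat (card ker_F)"
  have "finite ker_F"
    using finite_C_m ker_F_subset_C_m by (meson finite_subset subsetI)
  then have "c \<noteq> 0"
    using amplitude_nonzero finite_D zero_in_D zero_in_ker_F by (auto simp: c_def card_eq_0_iff)
  have "v = (\<Sum>\<Lambda>\<in>D. cscale (\<alpha> \<Lambda> / c) (\<Phi> \<Lambda>))"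
  proof
    fix y
    have "(\<Sum>\<Lambda>\<in>D. cscale (\<alpha> \<Lambda> / c) (\<Phi> \<Lambda>)) y = (\<Sum>\<Lambda>\<in>D. \<alpha> \<Lambda> * \<Phi> \<Lambda> y) / c"
      by (simp add: sum_cscale_apply[OF finite_D] sum_divide_distrib)
    also have "\<dots> = v y"
      using sum_Fourier_coefficients_Phi[OF supp inv, of y] \<open>c \<noteq> 0\<close> by (simp add: \<alpha>_def c_def)
    finally show "v y = (\<Sum>\<Lambda>\<in>D. cscale (\<alpha> \<Lambda> / c) (\<Phi> \<Lambda>)) y"
      by simp
  qed
  also have "\<dots> \<in> span_Phi"
    by (intro module.span_sum[OF module_cscale] module.span_scale[OF module_cscale] Phi_in_span_Phi)
  finally show ?thesis .
qed

lemma span_Phi_subset_Hsp: "span_Phi \<subseteq> Hsp N"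
  by (rule module.span_minimal[OF module_cscale _ subspace_Hsp]) (auto simp: Hsp_def Phi_def)

lemma span_Phi_eq_fixed_space: "span_Phi = {v \<in> Hsp N. \<forall>E\<in>Stab p r N span_Phi. E v = v}"
proof
  show "span_Phi \<subseteq> {v \<in> Hsp N. \<forall>E\<in>Stab p r N span_Phi. E v = v}"
    using span_Phi_subset_Hsp unfolding Stab_def by blast
  show "{v \<in> Hsp N. \<forall>E\<in>Stab p r N span_Phi. E v = v} \<subseteq> span_Phi"
  proof
    fix v assume "v \<in> {v \<in> Hsp N. \<forall>E\<in>Stab p r N span_Phi. E v = v}"
    then show "v \<in> span_Phi"
      using pauli_in_Stab by (intro mem_span_Phi_if_fixed) simp_all
  qed
qed

lemma sum_zpow_F_Phi:
  assumes "\<Lambda> \<in> D" "\<Lambda>' \<in> D"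
  shows "(\<Sum>x\<in>C_m. zpow p (- F \<Lambda>' x) * \<Phi> \<Lambda> x) = (if \<Lambda> = \<Lambda>' then amplitude * of_nat (card C_m) else 0)"
proof -
  have "(\<Sum>x\<in>C_m. zpow p (- F \<Lambda>' x) * \<Phi> \<Lambda> x) = (\<Sum>x\<in>C_m. amplitude * zpow p (F \<Lambda> x - F \<Lambda>' x))"
  proof (rule sum.cong[OF refl])
    fix x assume "x \<in> C_m"
    then show "zpow p (- F \<Lambda>' x) * \<Phi> \<Lambda> x = amplitude * zpow p (F \<Lambda> x - F \<Lambda>' x)"
      by (simp add: Phi_apply zpow_diff F_in_Fp)
  qed
  also have "\<dots> = amplitude * (\<Sum>x\<in>C_m. zpow p (F \<Lambda> x - F \<Lambda>' x))"
    by (simp add: sum_distrib_left)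
  also have "(\<Sum>x\<in>C_m. zpow p (F \<Lambda> x - F \<Lambda>' x)) = (if \<Lambda> = \<Lambda>' then of_nat (card C_m) else 0)"
  proof (cases "\<Lambda> = \<Lambda>'")
    case False
    then obtain x0 where "x0 \<in> C_m" "F \<Lambda> x0 \<noteq> F \<Lambda>' x0"
      using F_separates[OF assms] by blast
    then have "(\<Sum>x\<in>C_m. zpow p (F \<Lambda> x - F \<Lambda>' x)) = 0"
      by (intro sum_zpow_character_eq_0[OF finite_C_m C_m_add, of _ x0]) (simp_all add: F_add F_in_Fp)
    then show ?thesis
      using False by simp
  qed simp
  finally show ?thesis
    by simp
qed

lemma inj_on_Phi: "inj_on \<Phi> D"
proof (rule inj_onI)
  fix \<Lambda> \<Lambda>' assume "\<Lambda> \<in> D" "\<Lambda>' \<in> D" "\<Phi> \<Lambda> = \<Phi> \<Lambda>'"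
  then have "(if \<Lambda> = \<Lambda>' then amplitude * of_nat (card C_m) else 0) = amplitude * of_nat (card C_m)"
    using sum_zpow_F_Phi[of \<Lambda> \<Lambda>'] sum_zpow_F_Phi[of \<Lambda>' \<Lambda>'] by simp
  moreover have "card C_m \<noteq> 0"
    using finite_C_m zero_in_C_m by auto
  ultimately show "\<Lambda> = \<Lambda>'"
    using amplitude_nonzero by (auto split: if_splits)
qed

lemma independent_Phi: "\<not> module.dependent cscale (\<Phi> ` D)"
proof (rule vector_space.independent_if_scalars_zero[OF vector_space_cscale])
  show "finite (\<Phi> ` D)"
    using finite_D by simp
  fix f \<psi> assume f: "(\<Sum>x\<in>\<Phi> ` D. cscale (f x) x) = 0" and "\<psi> \<in> \<Phi> ` D"
  then obtain \<Lambda>' where "\<Lambda>' \<in> D" "\<psi> = \<Phi> \<Lambda>'"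
    by blast
  have "(\<Sum>\<Lambda>\<in>D. cscale (f (\<Phi> \<Lambda>)) (\<Phi> \<Lambda>)) = 0"
    using f by (simp add: sum.reindex[OF inj_on_Phi])
  then have "0 = (\<Sum>x\<in>C_m. zpow p (- F \<Lambda>' x) * (\<Sum>\<Lambda>\<in>D. cscale (f (\<Phi> \<Lambda>)) (\<Phi> \<Lambda>)) x)"
    by simp
  also have "\<dots> = (\<Sum>\<Lambda>\<in>D. f (\<Phi> \<Lambda>) * (\<Sum>x\<in>C_m. zpow p (- F \<Lambda>' x) * \<Phi> \<Lambda> x))"
    by (simp add: sum_cscale_apply[OF finite_D] sum_distrib_left mult_ac sum.swap[of _ C_m])
  also have "\<dots> = f (\<Phi> \<Lambda>') * (amplitude * of_nat (card C_m))"
    using \<open>\<Lambda>' \<in> D\<close> finite_D by (simp add: sum_zpow_F_Phi if_distrib cong: if_cong)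
  finally show "f \<psi> = 0"
    using \<open>\<psi> = \<Phi> \<Lambda>'\<close> amplitude_nonzero finite_C_m zero_in_C_m by auto
qed

lemma dim_span_Phi: "vector_space.dim cscale span_Phi = CARD('a) ^ (k * s)"
proof -
  have "{\<Phi> \<Lambda> | \<Lambda>. \<Lambda> \<in> D} = \<Phi> ` D"
    by blast
  then have "vector_space.dim cscale span_Phi = card D"
    using vector_space.dim_span_eq_card_independent[OF vector_space_cscale independent_Phi]
      card_image[OF inj_on_Phi] by simp
  then show ?thesis
    using card_lin_code[OF lin_D] dim_D card_ext_field by (simp add: power_mult)
qed

abbreviation "centralizer_set \<equiv>
  {pauli p r N w U V | w U V. w \<in> phases p \<and> U \<in> C_m \<and> V \<in> DT}"

abbreviation "stabilizer_times_center \<equiv>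
  {pauli p r N w X Y | w X Y. w \<in> phases p \<and> X \<in> ker_F \<and> Y \<in> Cperp_m}"

lemma centralizer_Stab_elementE:
  assumes E: "E \<in> centralizer (PG p r N) (Stab p r N span_Phi)"
  obtains w U V where "E = pauli p r N w U V" "w \<in> phases p" "U \<in> C_m" "V \<in> DT"
proof -
  obtain w a b where Ed: "E = pauli p r N w a b" "w \<in> phases p" "a \<in> vecs N" "b \<in> vecs N"
    using E unfolding centralizer_def PG_def by blast
  have commutes: "tr p r (dotp N b X) = tr p r (dotp N Y a)" if "X \<in> ker_F" "Y \<in> Cperp_m" for X Y
  proof -
    have "E \<circ> pauli p r N 1 X Y = pauli p r N 1 X Y \<circ> E"
      using E pauli_in_Stab[OF that] unfolding centralizer_def by blast
    then show ?thesis
      using pauli_commute_iff[OF phases_nonzero[OF Ed(2)] one_neq_zero, of N a b X Y] Ed(1) by simp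
  qed
  have "a \<in> C_m"
    using commutes[OF zero_in_ker_F] by (intro blocks_in_code_if_tr_orthogonal_dual[OF lin_C Ed(3)]) simp
  moreover have "b \<in> DT"
    using commutes[OF _ zero_in_Cperp_m] by (intro mem_DTheta_if_tr_orthogonal_ker_F[OF Ed(4)]) simp
  ultimately show ?thesis
    using that Ed by blast
qed

lemma pauli_commutes_with_Stab:
  assumes "w \<in> phases p" "U \<in> C_m" "V \<in> DT" "G \<in> Stab p r N span_Phi"
  shows "pauli p r N w U V \<circ> G = G \<circ> pauli p r N w U V"
proof -
  obtain X Y where "G = pauli p r N 1 X Y" "X \<in> ker_F" "Y \<in> Cperp_m"
    using assms(4) by (rule Stab_elementE)
  then show ?thesis
    using pauli_commute_iff[OF phases_nonzero[OF assms(1)] one_neq_zero, of N U V X Y]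
      tr_dotp_DTheta_ker_F[OF assms(3)] dotp_Cperp_m_C_m[OF _ assms(2)] by simp
qed

lemma centralizer_Stab: "centralizer (PG p r N) (Stab p r N span_Phi) = centralizer_set"
proof (intro equalityI subsetI)
  fix E assume "E \<in> centralizer (PG p r N) (Stab p r N span_Phi)"
  then show "E \<in> centralizer_set"
    by (rule centralizer_Stab_elementE) blast
next
  fix E assume "E \<in> centralizer_set"
  then obtain w U V where E: "E = pauli p r N w U V" "w \<in> phases p" "U \<in> C_m" "V \<in> DT"
    by blast
  then have "E \<in> PG p r N"
    using C_m_subset_vecs DTheta_subset_vecs unfolding PG_def by blast
  moreover have "\<forall>G\<in>Stab p r N span_Phi. E \<circ> G = G \<circ> E"
    using pauli_commutes_with_Stab[OF E(2-4)] E(1) by blast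
  ultimately show "E \<in> centralizer (PG p r N) (Stab p r N span_Phi)"
    unfolding centralizer_def by blast
qed

lemma Stab_times_center: "setprod (Stab p r N span_Phi) (center (PG p r N)) = stabilizer_times_center"
proof (intro equalityI subsetI)
  fix G assume "G \<in> setprod (Stab p r N span_Phi) (center (PG p r N))"
  then obtain X Y w where "G = pauli p r N 1 X Y \<circ> pauli p r N w 0 0"
      "X \<in> ker_F" "Y \<in> Cperp_m" "w \<in> phases p"
    unfolding setprod_def Stab_span_Phi center_PG by blast
  then show "G \<in> stabilizer_times_center"
    by (auto simp: pauli_comp)
next
  fix G assume "G \<in> stabilizer_times_center"
  then obtain w X Y where G: "G = pauli p r N w X Y" "w \<in> phases p" "X \<in> ker_F" "Y \<in> Cperp_m"
    by blast
  then have "G = pauli p r N 1 X Y \<circ> pauli p r N w 0 0"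
    by (simp add: pauli_comp)
  then show "G \<in> setprod (Stab p r N span_Phi) (center (PG p r N))"
    unfolding setprod_def Stab_span_Phi center_PG using G by blast
qed

lemma pauli_in_centralizer_minus_iff:
  assumes "w \<in> phases p" "U \<in> vecs N" "V \<in> vecs N"
  shows "pauli p r N w U V \<in> centralizer_set - stabilizer_times_center
    \<longleftrightarrow> U \<in> C_m \<and> V \<in> DT \<and> \<not> (U \<in> ker_F \<and> V \<in> Cperp_m)"
  using pauli_mem_pauli_set_iff[OF assms, of C_m DT] pauli_mem_pauli_set_iff[OF assms, of ker_F Cperp_m]
    C_m_subset_vecs DTheta_subset_vecs ker_F_subset_C_m Cperp_m_subset_vecs by blast

lemma finite_hw_DTheta: "finite (hw N ` (DT - Cperp_m))"
  using finite_subset[OF _ finite_vecs[of N]] DTheta_subset_vecs by blast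

lemma ell_le_hw: "V \<in> DT \<Longrightarrow> V \<notin> Cperp_m \<Longrightarrow> ell p r n m C \<kappa> D \<le> hw N V"
  unfolding ell_def using finite_hw_DTheta by (intro Min_le) auto

lemma weight_lower_bound:
  assumes "U \<in> C_m" "V \<in> DT" "\<not> (U \<in> ker_F \<and> V \<in> Cperp_m)"
  shows "min (min_dist n C) (ell p r n m C \<kappa> D) \<le> card {j. j < N \<and> (U j \<noteq> 0 \<or> V j \<noteq> 0)}"
proof (cases "U \<in> ker_F")
  case False
  then have "U \<noteq> 0"
    using zero_in_ker_F by auto
  then obtain i where "i < m" "block n i U \<noteq> 0"
    using eq_0_if_blocks_eq_0[OF C_m_subset_vecs[OF assms(1)]] by blast
  moreover have "block n i U \<in> C"
    using assms(1) \<open>i < m\<close> by (simp add: blocks_in_def)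
  ultimately have "min_dist n C \<le> card {j. j < N \<and> (U j \<noteq> 0 \<or> V j \<noteq> 0)}"
    using min_dist_le_hw[OF lin_C] hw_block_le[OF \<open>i < m\<close>] order.trans by blast
  then show ?thesis
    by simp
next
  case True
  then have "ell p r n m C \<kappa> D \<le> hw N V"
    using assms ell_le_hw by blast
  also have "hw N V \<le> card {j. j < N \<and> (U j \<noteq> 0 \<or> V j \<noteq> 0)}"
    unfolding hw_def by (rule card_mono) auto
  finally show ?thesis
    by simp
qed

text \<open>A codeword in the first block is detected by \<open>F_\<Lambda>\<close> with \<open>\<Lambda> = u d\<close>, where \<open>d \<in> D\<close> has
  \<open>d 0 = 1\<close> and \<open>\<kappa> u\<close> is a functional not vanishing on it.\<close>

lemma embed_block_notin_ker_F:
  assumes "c \<in> C" "c \<noteq> 0"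
  shows "embed_block n 0 c \<notin> ker_F"
proof
  assume "embed_block n 0 c \<in> ker_F"
  obtain g where "g \<in> lin_maps p C" "g c \<noteq> 0"
    using lin_map_nonzero_at[OF lin_C assms] .
  then obtain u where "\<kappa> u = g"
    using \<kappa>_surj by blast
  obtain d where "d \<in> D" "d 0 = 1"
    using D_hits_1 m_pos by blast
  then have "vscale u d \<in> D"
    using lin_code_vscale[OF lin_D] by blast
  moreover have "F (vscale u d) (embed_block n 0 c) = g c"
    using F_embed_block[OF m_pos assms(1)] \<open>d 0 = 1\<close> \<open>\<kappa> u = g\<close> by (simp add: vscale_def)
  ultimately show False
    using \<open>embed_block n 0 c \<in> ker_F\<close> \<open>g c \<noteq> 0\<close> by (simp add: ker_F_def)
qed

lemma Theta_one_disjoint_dual: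
  assumes "x \<in> Theta p r n C (\<kappa> 1)"
  shows "x \<notin> dual n C"
proof
  assume "x \<in> dual n C"
  have "\<kappa> 1 c = 0" for c
  proof (cases "c \<in> C")
    case True
    then have "\<kappa> 1 c = tr p r (dotp n c x)"
      using assms by (simp add: Theta_def)
    also have "dotp n c x = 0"
      using \<open>x \<in> dual n C\<close> True by (simp add: dual_def)
    finally show ?thesis
      by simp
  qed (rule \<kappa>_outside_code)
  then have "\<kappa> 1 = \<kappa> 0"
    unfolding \<kappa>_zero by (simp add: fun_eq_iff)
  then have "(1 :: 'b) = 0"
    by (rule \<kappa>_inj)
  then show False
    by simp
qed

text \<open>Choosing the blocks of \<open>V\<close> in \<open>\<Theta>(\<kappa> (d i))\<close> for \<open>d \<in> D\<close> with \<open>d 0 = 1\<close> gives \<open>V \<in> D^\<Theta>\<close>,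
  and its first block cannot lie in \<open>C^\<bottom>\<close> since \<open>\<kappa> 1 \<noteq> 0\<close>.\<close>

lemma DTheta_minus_Cperp_m_nonempty: "DT - Cperp_m \<noteq> {}"
proof -
  obtain d where "d \<in> D" "d 0 = 1"
    using D_hits_1 m_pos by blast
  define xs where "xs i = (SOME x. x \<in> Theta p r n C (\<kappa> (d i)))" for i
  have xs: "xs i \<in> Theta p r n C (\<kappa> (d i))" for i
    unfolding xs_def using Theta_nonempty[OF lin_C \<kappa>_in_lin_maps] by (rule someI_ex)
  then have "xs i \<in> vecs n" for i
    by (simp add: Theta_def)
  define V where "V = concat_blocks n m xs"
  have blocks: "block n i V = xs i" if "i < m" for i
    using block_concat_blocks[of i m xs n] that \<open>\<And>i. xs i \<in> vecs n\<close> by (simp add: V_def)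
  have "V \<in> vecs N"
    by (simp add: V_def concat_blocks_in_vecs)
  then have "V \<in> {X \<in> vecs N. \<forall>i<m. block n i X \<in> Theta p r n C (\<kappa> (d i))}"
    using blocks xs by simp
  then have "V \<in> DT"
    unfolding DTheta_def using \<open>d \<in> D\<close> by blast
  moreover have "V \<notin> Cperp_m"
  proof
    assume "V \<in> Cperp_m"
    then have "xs 0 \<in> dual n C"
      using blocks[OF m_pos] m_pos unfolding blocks_in_def by auto
    then show False
      using Theta_one_disjoint_dual xs[of 0] \<open>d 0 = 1\<close> by simp
  qed
  ultimately show ?thesis
    by blast
qed

lemma ell_attained:
  obtains V where "V \<in> DT" "V \<notin> Cperp_m" "hw N V = ell p r n m C \<kappa> D"
proof -
  have "ell p r n m C \<kappa> D \<in> hw N ` (DT - Cperp_m)"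
    unfolding ell_def using finite_hw_DTheta DTheta_minus_Cperp_m_nonempty by (intro Min_in) auto
  then obtain V where "V \<in> DT - Cperp_m" "ell p r n m C \<kappa> D = hw N V"
    by (rule imageE)
  then show ?thesis
    by (intro that[of V]) simp_all
qed

lemma min_dist_attained_in_centralizer:
  obtains E where "E \<in> centralizer_set - stabilizer_times_center" "pweight p r N E = min_dist n C"
proof -
  obtain c where c: "c \<in> C" "c \<noteq> 0" "hw n c = min_dist n C"
    using min_dist_attained[OF lin_C] dim_C k_pos by metis
  have "embed_block n 0 c \<in> C_m"
    using embed_block_in_C_m[OF m_pos c(1)] .
  then have E: "pauli p r N 1 (embed_block n 0 c) 0 \<in> centralizer_set - stabilizer_times_center"
    using pauli_in_centralizer_minus_iff[OF one_in_phases C_m_subset_vecs vecs_zero]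
      zero_in_DTheta embed_block_notin_ker_F[OF c(1,2)] by simp
  have "pweight p r N (pauli p r N 1 (embed_block n 0 c) 0) = hw N (embed_block n 0 c)"
    using pweight_pauli[OF one_in_phases C_m_subset_vecs[OF \<open>embed_block n 0 c \<in> C_m\<close>] vecs_zero]
    by (simp add: hw_def)
  also have "\<dots> = min_dist n C"
    by (rule trans[OF hw_embed_block_0[OF m_pos] c(3)])
  finally show ?thesis
    using E by (rule_tac that)
qed

lemma ell_attained_in_centralizer:
  obtains E where "E \<in> centralizer_set - stabilizer_times_center" "pweight p r N E = ell p r n m C \<kappa> D"
proof -
  obtain V where V: "V \<in> DT" "V \<notin> Cperp_m" "hw N V = ell p r n m C \<kappa> D"
    using ell_attained .
  have "pauli p r N 1 0 V \<in> centralizer_set - stabilizer_times_center"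
    using pauli_in_centralizer_minus_iff[OF one_in_phases vecs_zero DTheta_subset_vecs[OF V(1)]]
      zero_in_C_m V(1,2) by simp
  moreover have "pweight p r N (pauli p r N 1 0 V) = ell p r n m C \<kappa> D"
    using pweight_pauli[OF one_in_phases vecs_zero DTheta_subset_vecs[OF V(1)]] V(3) by (simp add: hw_def)
  ultimately show ?thesis
    by (rule that)
qed

lemma pweight_lower_bound:
  assumes "E \<in> centralizer_set - stabilizer_times_center"
  shows "min (min_dist n C) (ell p r n m C \<kappa> D) \<le> pweight p r N E"
proof -
  obtain w U V where E: "E = pauli p r N w U V" "w \<in> phases p" "U \<in> C_m" "V \<in> DT"
    using assms by blast
  have "E \<notin> stabilizer_times_center"
    using assms by blast
  then have "\<not> (U \<in> ker_F \<and> V \<in> Cperp_m)"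
    using E(1,2) by blast
  then show ?thesis
    using E weight_lower_bound[of U V] pweight_pauli[OF E(2) C_m_subset_vecs[OF E(3)] DTheta_subset_vecs[OF E(4)]]
    by simp
qed

lemma min_pweight_centralizer_minus:
  "Min (pweight p r N ` (centralizer_set - stabilizer_times_center)) = min (min_dist n C) (ell p r n m C \<kappa> D)"
proof -
  let ?W = "pweight p r N ` (centralizer_set - stabilizer_times_center)"
  have "centralizer_set \<subseteq> PG p r N"
    using centralizer_Stab unfolding centralizer_def by blast
  then have "finite ?W"
    using finite_subset[OF _ finite_PG] by blast
  obtain E1 where E1: "E1 \<in> centralizer_set - stabilizer_times_center" "pweight p r N E1 = min_dist n C"
    using min_dist_attained_in_centralizer .
  obtain E2 where E2: "E2 \<in> centralizer_set - stabilizer_times_center" "pweight p r N E2 = ell p r n m C \<kappa> D"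
    using ell_attained_in_centralizer .
  have "?W \<noteq> {}"
    using E1(1) by blast
  have "min (min_dist n C) (ell p r n m C \<kappa> D) \<le> Min ?W"
  proof (rule Min.boundedI[OF \<open>finite ?W\<close> \<open>?W \<noteq> {}\<close>])
    fix t assume "t \<in> ?W"
    then obtain E where "E \<in> centralizer_set - stabilizer_times_center" "t = pweight p r N E"
      by (rule imageE)
    then show "min (min_dist n C) (ell p r n m C \<kappa> D) \<le> t"
      using pweight_lower_bound by simp
  qed
  moreover have "Min ?W \<le> min_dist n C" "Min ?W \<le> ell p r n m C \<kappa> D"
    using Min_le[OF \<open>finite ?W\<close> imageI[OF E1(1)]] Min_le[OF \<open>finite ?W\<close> imageI[OF E2(1)]] E1(2) E2(2)
    by simp_all
  ultimately show ?thesis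
    by simp
qed

lemma stabilizer_times_center_ne: "stabilizer_times_center \<noteq> centralizer_set"
proof
  assume eq: "stabilizer_times_center = centralizer_set"
  obtain E where "E \<in> centralizer_set - stabilizer_times_center"
    using min_dist_attained_in_centralizer .
  then show False
    by (simp only: eq Diff_cancel empty_iff)
qed

end

theorem theorem3p3:
  fixes p r n m k s :: nat
    and C :: "(nat \<Rightarrow> 'a::{field,finite}) set"
    and D :: "(nat \<Rightarrow> 'b::{field,finite}) set"
    and \<kappa> :: "'b \<Rightarrow> (nat \<Rightarrow> 'a) \<Rightarrow> 'a"
    and Q :: "'a qstate set"
  assumes "prime p" and "r \<ge> 1" and "CARD('a) = p ^ r"
    and "CARD('b) = CARD('a) ^ k"
    and "lin_code n C" and "code_dim C = k" and "1 \<le> k" and "k < n"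
    and "lin_code m D" and "code_dim D = s" and "1 \<le> s" and "s < m"
    and "\<forall>i<m. \<exists>d\<in>D. d i = 1"
    and "\<forall>u v. \<kappa> (u + v) = \<kappa> u + \<kappa> v"
    and "\<forall>j::nat. \<forall>u. \<kappa> (of_nat j * u) = (\<lambda>x. of_nat j * \<kappa> u x)"
    and "bij_betw \<kappa> UNIV (lin_maps p C)"
    and "Q = module.span cscale {Phi p n m C \<kappa> \<Lambda> | \<Lambda>. \<Lambda> \<in> D}"
  shows "is_stabilizer_code p r (n * m) Q
    \<and> vector_space.dim cscale Q = CARD('a) ^ (k * s)
    \<and> stab_min_dist p r (n * m) Q = min (min_dist n C) (ell p r n m C \<kappa> D)
    \<and> Stab p r (n * m) Q = {pauli p r (n * m) 1 X Y | X Y.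
          X \<in> {X \<in> blocks_in n m C. \<forall>\<Lambda>\<in>D. FLam n m \<kappa> \<Lambda> X = 0}
          \<and> Y \<in> blocks_in n m (dual n C)}
    \<and> centralizer (PG p r (n * m)) (Stab p r (n * m) Q) =
        {pauli p r (n * m) w U V | w U V. w \<in> phases p
          \<and> U \<in> blocks_in n m C \<and> V \<in> DTheta p r n m C \<kappa> D}"
proof -
  have "0 < m"
    using \<open>s < m\<close> by simp
  interpret quantum_code_construction p r "\<lambda>x. zpow p (tr p r x)" n m k s C D \<kappa>
    by unfold_locales (rule assms \<open>0 < m\<close>)+
  show ?thesis
    unfolding assms(17)
  proof (intro conjI)
    show "is_stabilizer_code p r N span_Phi"
      unfolding is_stabilizer_code_def
      using span_Phi_subset_Hsp module.subspace_span[OF module_cscale] span_Phi_eq_fixed_space by (intro conjI)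
    show "stab_min_dist p r N span_Phi = min (min_dist n C) (ell p r n m C \<kappa> D)"
      unfolding stab_min_dist_def Let_def centralizer_Stab Stab_times_center
      using stabilizer_times_center_ne min_pweight_centralizer_minus by simp
    show "Stab p r N span_Phi = {pauli p r N 1 X Y | X Y. X \<in> {X \<in> C_m. \<forall>\<Lambda>\<in>D. F \<Lambda> X = 0} \<and> Y \<in> Cperp_m}"
      using Stab_span_Phi by (simp add: ker_F_def)
  qed (use dim_span_Phi centralizer_Stab in simp_all)
qed

end
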